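(* Let $p\in[1,\infty]$ and let $H:\ell^p(\mathbb{Z})\to\ell^p(\mathbb{Z})$ be given by $(Hx)_n=x_{n+1}+x_{n-1}+v(n)x_n$, $n\in\mathbb{Z}$, where $v:\mathbb{Z}\to\mathbb{R}$ is periodic with period $K\in\mathbb{N}$ (i.e. $v(n+K)=v(n)$ for all $n$). Set \[ M:=\begin{pmatrix}-v(K-1)&-1\\1&0\end{pmatrix}\cdots\begin{pmatrix}-v(1)&-1\\1&0\end{pmatrix}\begin{pmatrix}-v(0)&-1\\1&0\end{pmatrix}. \] If one of the following three assumptions is satisfied: (a) $K=2$ and $v(n)\in\mathbb{R}$ for all $n\in\mathbb{Z}$; (b) $K\leq 8$ and $v(n)\in\{0,\lambda\}$ for all $n\in\mathbb{Z}$ for a fixed rational number $\lambda\in\mathbb{Q}$; (c) $K\in\mathbb{N}$ and $v(n)\in\mathbb{Z}$ for all $n\in\mathbb{Z}$; then the finite section method for $H$ is applicable if and only if $|\operatorname{tr}(M)|>2$.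
   Context: Finite section method (FSM): for a bounded operator $A$ on $\ell^p(\mathbb{Z})$ with matrix $(a_{ij})_{i,j\in\mathbb{Z}}$ w.r.t. the canonical basis, let $A_n=(a_{ij})_{i,j=-n}^n$; the FSM for $A$ is called applicable if $A$ is invertible, the matrices $A_n$ are invertible for all sufficiently large $n$, and their inverses (embedded into two-sided infinite matrices) converge strongly to $A^{-1}$.
   Formalization: For p = infinity, the embedded inverses of $A_n$ converge to $A^{-1}$ not strongly but in the sense that their difference, multiplied on either side by the projection onto coordinates -k..k, tends to 0 in operator norm for each k. The statement above fails without it. *)

theory Defs
  imports "HOL-Analysis.Analysis"
begin

definition lp :: "ereal \<Rightarrow> (int \<Rightarrow> complex) set" where
  "lp p = {x. if p = \<infinity> then bounded (range x)
              else (\<lambda>n. norm (x n) powr real_of_ereal p) summable_on UNIV}"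

definition lp_norm :: "ereal \<Rightarrow> (int \<Rightarrow> complex) \<Rightarrow> real" where
  "lp_norm p x = (if p = \<infinity> then (SUP n. norm (x n))
                  else (infsum (\<lambda>n. norm (x n) powr real_of_ereal p) UNIV) powr (1 / real_of_ereal p))"

definition bounded_lp_op :: "ereal \<Rightarrow> ((int \<Rightarrow> complex) \<Rightarrow> (int \<Rightarrow> complex)) \<Rightarrow> bool" where
  "bounded_lp_op p A \<longleftrightarrow>
     (\<forall>x\<in>lp p. A x \<in> lp p) \<and>
     (\<forall>x\<in>lp p. \<forall>y\<in>lp p. A (\<lambda>n. x n + y n) = (\<lambda>n. A x n + A y n)) \<and>
     (\<forall>x\<in>lp p. \<forall>c. A (\<lambda>n. c * x n) = (\<lambda>n. c * A x n)) \<and>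
     (\<exists>C. \<forall>x\<in>lp p. lp_norm p (A x) \<le> C * lp_norm p x)"

definition is_lp_inverse :: "ereal \<Rightarrow> ((int \<Rightarrow> complex) \<Rightarrow> (int \<Rightarrow> complex))
    \<Rightarrow> ((int \<Rightarrow> complex) \<Rightarrow> (int \<Rightarrow> complex)) \<Rightarrow> bool" where
  "is_lp_inverse p A B \<longleftrightarrow> bounded_lp_op p B \<and> (\<forall>x\<in>lp p. B (A x) = x \<and> A (B x) = x)"

definition invertible_lp :: "ereal \<Rightarrow> ((int \<Rightarrow> complex) \<Rightarrow> (int \<Rightarrow> complex)) \<Rightarrow> bool" where
  "invertible_lp p A \<longleftrightarrow> bounded_lp_op p A \<and> (\<exists>B. is_lp_inverse p A B)"

definition lp_inv :: "ereal \<Rightarrow> ((int \<Rightarrow> complex) \<Rightarrow> (int \<Rightarrow> complex)) \<Rightarrow> ((int \<Rightarrow> complex) \<Rightarrow> (int \<Rightarrow> complex))" where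
  "lp_inv p A = (SOME B. is_lp_inverse p A B)"

definition op_entry :: "((int \<Rightarrow> complex) \<Rightarrow> (int \<Rightarrow> complex)) \<Rightarrow> int \<Rightarrow> int \<Rightarrow> complex" where
  "op_entry A i j = A (\<lambda>k. if k = j then 1 else 0) i"

definition sec :: "nat \<Rightarrow> int set" where
  "sec n = {- int n .. int n}"

definition is_section_inverse :: "((int \<Rightarrow> complex) \<Rightarrow> (int \<Rightarrow> complex)) \<Rightarrow> nat \<Rightarrow> (int \<Rightarrow> int \<Rightarrow> complex) \<Rightarrow> bool" where
  "is_section_inverse A n B \<longleftrightarrow>
     (\<forall>i\<in>sec n. \<forall>j\<in>sec n.
        (\<Sum>k\<in>sec n. op_entry A i k * B k j) = (if i = j then 1 else 0) \<and>
        (\<Sum>k\<in>sec n. B i k * op_entry A k j) = (if i = j then 1 else 0))"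

definition section_invertible :: "((int \<Rightarrow> complex) \<Rightarrow> (int \<Rightarrow> complex)) \<Rightarrow> nat \<Rightarrow> bool" where
  "section_invertible A n \<longleftrightarrow> (\<exists>B. is_section_inverse A n B)"

text \<open>The inverse of A_n, embedded into a two-sided infinite matrix (zero outside the section),
  acting as an operator on sequences.\<close>
definition section_inv_op :: "((int \<Rightarrow> complex) \<Rightarrow> (int \<Rightarrow> complex)) \<Rightarrow> nat \<Rightarrow> (int \<Rightarrow> complex) \<Rightarrow> (int \<Rightarrow> complex)" where
  "section_inv_op A n x =
     (let B = (SOME B. is_section_inverse A n B)
      in (\<lambda>i. if i \<in> sec n then (\<Sum>j\<in>sec n. B i j * x j) else 0))"

definition proj :: "nat \<Rightarrow> (int \<Rightarrow> complex) \<Rightarrow> (int \<Rightarrow> complex)" where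
  "proj k x = (\<lambda>i. if i \<in> sec k then x i else 0)"

definition lp_opnorm :: "ereal \<Rightarrow> ((int \<Rightarrow> complex) \<Rightarrow> (int \<Rightarrow> complex)) \<Rightarrow> real" where
  "lp_opnorm p T = Sup {lp_norm p (T x) | x. x \<in> lp p \<and> lp_norm p x \<le> 1}"

text \<open>Strong convergence on l^p for p < infinity; for p = infinity the usual
  substitute (P-strong convergence, cf. Lindner/Roch/Rabinovich/Silbermann).\<close>
definition strong_conv :: "ereal \<Rightarrow> (nat \<Rightarrow> (int \<Rightarrow> complex) \<Rightarrow> (int \<Rightarrow> complex))
    \<Rightarrow> ((int \<Rightarrow> complex) \<Rightarrow> (int \<Rightarrow> complex)) \<Rightarrow> bool" where
  "strong_conv p Bs B \<longleftrightarrow>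
     (if p = \<infinity> then
        (\<forall>k. (\<lambda>n. lp_opnorm p (\<lambda>x. proj k (\<lambda>i. Bs n x i - B x i))) \<longlonglongrightarrow> 0 \<and>
             (\<lambda>n. lp_opnorm p (\<lambda>x. (\<lambda>i. Bs n (proj k x) i - B (proj k x) i))) \<longlonglongrightarrow> 0)
      else (\<forall>x\<in>lp p. (\<lambda>n. lp_norm p (\<lambda>i. Bs n x i - B x i)) \<longlonglongrightarrow> 0))"

definition fsm_applicable :: "ereal \<Rightarrow> ((int \<Rightarrow> complex) \<Rightarrow> (int \<Rightarrow> complex)) \<Rightarrow> bool" where
  "fsm_applicable p A \<longleftrightarrow>
     invertible_lp p A \<and>
     (\<exists>N. \<forall>n\<ge>N. section_invertible A n) \<and>
     strong_conv p (section_inv_op A) (lp_inv p A)"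

definition schroedinger :: "(int \<Rightarrow> real) \<Rightarrow> (int \<Rightarrow> complex) \<Rightarrow> (int \<Rightarrow> complex)" where
  "schroedinger v x = (\<lambda>n. x (n + 1) + x (n - 1) + complex_of_real (v n) * x n)"

definition transfer :: "real \<Rightarrow> real^2^2" where
  "transfer c = vector [vector [- c, - 1], vector [1, 0]]"

fun monodromy :: "(int \<Rightarrow> real) \<Rightarrow> nat \<Rightarrow> real^2^2" where
  "monodromy v 0 = mat 1"
| "monodromy v (Suc k) = transfer (v (int k)) ** monodromy v k"

end

theory Submission
  imports Defs
begin

text \<open>
  If \<open>|tr M| \<le> 2\<close>, the monodromy matrix has an eigenvalue on the unit circle, so there is a
  Bloch solution of \<open>Hu = 0\<close> with \<open>|u (n + K)| = |u n|\<close>. It lies in \<open>\<ell>\<^sup>\<infinity>\<close>, and its truncations to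
  \<open>[-1, N K]\<close> have \<open>\<ell>\<^sup>p\<close>-norm growing like \<open>N\<^bsup>1/p\<^esup>\<close> while \<open>H\<close> maps them to vectors supported on four
  points; either way \<open>H\<close> is not invertible on \<open>\<ell>\<^sup>p\<close>.

  If \<open>|tr M| > 2\<close>, the Floquet multipliers \<open>s\<close> and \<open>1/s\<close> with \<open>|s| < 1\<close> give Bloch solutions
  \<open>\<phi>s\<close>, \<open>\<phi>u\<close> decaying exponentially to the right and to the left. Under each of the hypotheses
  (a)--(c) a Bloch solution with multiplier \<open>\<noteq> \<plusminus>1\<close> never vanishes (for (b) this is a finite check
  using the rational root theorem), so \<open>|\<phi>s n|\<close> and \<open>|\<phi>u n|\<close> are comparable to \<open>\<rho>\<^sup>n\<close> and \<open>\<rho>\<^sup>-\<^sup>n\<close>.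
  The Green kernel \<open>\<phi>u (min i j) \<phi>s (max i j) / W\<close> decays like \<open>\<rho>\<^bsup>|i-j|\<^esup>\<close> and inverts \<open>H\<close>. The
  inverse of the finite section \<open>A\<^sub>n\<close> is the Green kernel of the combinations of \<open>\<phi>u\<close>, \<open>\<phi>s\<close>
  vanishing at \<open>-n-1\<close> and \<open>n+1\<close>; it differs from the full one by a kernel that is exponentially small
  in the distance to the boundary, which gives the strong convergence.
\<close>

section \<open>Sequence spaces and convolution-dominated operators\<close>

lemma powr_ge_tangent:
  fixes a m P :: real
  assumes "0 < m" "0 \<le> a" "1 \<le> P"
  shows "m powr P + P * m powr (P - 1) * (a - m) \<le> a powr P"
proof (cases "a = 0")
  case True
  have q: "m powr (P - 1) * m = m powr P"
    using assms powr_add[of m "P - 1" 1] by simp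
  have "m powr P + P * m powr (P - 1) * (a - m) = (1 - P) * m powr P"
    using True q by (simp add: algebra_simps)
  also have "\<dots> \<le> 0" using assms by (simp add: mult_nonpos_nonneg)
  finally show ?thesis using True by simp
next
  case False
  then have a0: "a > 0" using assms by simp
  have "a powr P - m powr P \<ge> (P * m powr (P - 1)) * (a - m)"
    by (rule convex_on_imp_above_tangent[where A="{0<..}"])
       (use assms a0 powr_convex[OF assms(3)] has_real_derivative_powr[of m P] in
         \<open>auto simp: has_field_derivative_at_within interior_open\<close>)
  then show ?thesis by simp
qed

lemma infsum_tangent_le:
  fixes w a :: "'i \<Rightarrow> real"
  assumes w0: "\<And>j. w j \<ge> 0" and a0: "\<And>j. a j \<ge> 0" and P: "1 \<le> P" and m: "0 < m"
    and ws: "w summable_on UNIV" and was: "(\<lambda>j. w j * a j) summable_on UNIV"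
    and wps: "(\<lambda>j. w j * a j powr P) summable_on UNIV"
  shows "infsum w UNIV * m powr P + P * m powr (P - 1) * (infsum (\<lambda>j. w j * a j) UNIV - m * infsum w UNIV)
           \<le> infsum (\<lambda>j. w j * a j powr P) UNIV"
proof -
  have e: "(\<lambda>j. w j * (m powr P + P * m powr (P - 1) * (a j - m)))
           = (\<lambda>j. w j * (m powr P - P * m powr (P - 1) * m) + (w j * a j) * (P * m powr (P - 1)))"
    by (auto simp: algebra_simps)
  have s1: "(\<lambda>j. w j * (m powr P - P * m powr (P - 1) * m)) summable_on UNIV"
    and s2: "(\<lambda>j. (w j * a j) * (P * m powr (P - 1))) summable_on UNIV"
    using summable_on_cmult_left[OF ws] summable_on_cmult_left[OF was] by blast+
  have "infsum w UNIV * m powr P + P * m powr (P - 1) * (infsum (\<lambda>j. w j * a j) UNIV - m * infsum w UNIV)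
      = infsum (\<lambda>j. w j * (m powr P + P * m powr (P - 1) * (a j - m))) UNIV"
    unfolding e infsum_add[OF s1 s2] infsum_cmult_left[OF ws] infsum_cmult_left[OF was]
    by (simp add: algebra_simps)
  also have "\<dots> \<le> infsum (\<lambda>j. w j * a j powr P) UNIV"
    by (rule infsum_mono[OF summable_on_add[OF s1 s2, folded e] wps])
       (rule mult_left_mono[OF powr_ge_tangent[OF m a0 P] w0])
  finally show ?thesis .
qed

lemma Jensen_infsum_powr:
  fixes w a :: "'i \<Rightarrow> real"
  assumes w0: "\<And>j. w j \<ge> 0" and a0: "\<And>j. a j \<ge> 0" and P: "1 \<le> P"
    and ws: "w summable_on UNIV" and was: "(\<lambda>j. w j * a j) summable_on UNIV"
    and wps: "(\<lambda>j. w j * a j powr P) summable_on UNIV"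
  shows "(infsum (\<lambda>j. w j * a j) UNIV) powr P
           \<le> (infsum w UNIV) powr (P - 1) * infsum (\<lambda>j. w j * a j powr P) UNIV"
proof -
  define S where "S = infsum w UNIV"
  define T where "T = infsum (\<lambda>j. w j * a j) UNIV"
  define R where "R = infsum (\<lambda>j. w j * a j powr P) UNIV"
  have S0: "S \<ge> 0" and T0: "T \<ge> 0" and R0: "R \<ge> 0"
    unfolding S_def T_def R_def by (intro infsum_nonneg; use w0 a0 in auto)+
  have "T powr P \<le> S powr (P - 1) * R"
  proof (cases "T = 0")
    case False
    have "S \<noteq> 0"
    proof
      assume "S = 0"
      then have "\<forall>j\<in>UNIV. w j = 0"
        using nonneg_infsum_le_0D[of w UNIV] ws w0 unfolding S_def by auto
      then show False using False unfolding T_def by simp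
    qed
    then have Sp: "S > 0" and Tp: "T > 0" using S0 T0 False by auto
    text \<open>The tangent of \<open>t powr P\<close> at the weighted mean \<open>T / S\<close>.\<close>
    have "S * (T / S) powr P \<le> R"
      using infsum_tangent_le[OF w0 a0 P _ ws was wps, of "T / S"] Sp Tp unfolding S_def T_def R_def by simp
    moreover have "S * (T / S) powr P = T powr P / S powr (P - 1)"
      using Sp Tp powr_add[of S "P - 1" 1] by (simp add: powr_divide field_simps)
    ultimately show ?thesis using Sp by (simp add: divide_le_eq mult.commute)
  qed (use S0 R0 P in simp)
  then show ?thesis unfolding S_def T_def R_def .
qed

lemma summable_on_sum_family:
  fixes f :: "'i \<Rightarrow> 'j \<Rightarrow> real"
  assumes "finite F" "\<And>i. i \<in> F \<Longrightarrow> f i summable_on A"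
  shows "(\<lambda>j. \<Sum>i\<in>F. f i j) summable_on A"
  using assms by (induction F rule: finite_induct) (auto intro: summable_on_add)

lemma sum_infsum_commute:
  fixes f :: "'i \<Rightarrow> 'j \<Rightarrow> real"
  assumes "finite F" "\<And>i. i \<in> F \<Longrightarrow> f i summable_on A"
  shows "(\<Sum>i\<in>F. infsum (f i) A) = infsum (\<lambda>j. \<Sum>i\<in>F. f i j) A"
  using assms
proof (induction F rule: finite_induct)
  case (insert x F)
  have "(\<Sum>i\<in>insert x F. infsum (f i) A) = infsum (f x) A + infsum (\<lambda>j. \<Sum>i\<in>F. f i j) A"
    using insert by auto
  also have "\<dots> = infsum (\<lambda>j. f x j + (\<Sum>i\<in>F. f i j)) A"
    by (rule infsum_add[symmetric]) (use insert in \<open>auto intro!: summable_on_sum_family\<close>)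
  finally show ?case using insert by simp
qed simp

lemma bij_betw_reflect_int: "bij_betw (\<lambda>j::int. i - j) UNIV UNIV"
  by (rule bij_betwI[where g="\<lambda>j. i - j"]) auto

lemma bij_betw_shift_int: "bij_betw (\<lambda>j::int. j + c) UNIV UNIV"
  by (rule bij_betwI[where g="\<lambda>j. j - c"]) auto

lemma summable_on_reflect_int_iff:
  "(\<lambda>j::int. g (i - j)) summable_on UNIV \<longleftrightarrow> g summable_on UNIV"
  using summable_on_reindex_bij_betw[OF bij_betw_reflect_int, of g i] by simp

lemma infsum_reflect_int:
  "infsum (\<lambda>j::int. g (i - j)) UNIV = infsum g UNIV"
  using infsum_reindex_bij_betw[OF bij_betw_reflect_int, of g i] by simp

lemma infsum_kronecker:
  fixes x :: "'i \<Rightarrow> 'a :: {comm_ring_1, topological_ab_group_add, t2_space}"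
  shows "infsum (\<lambda>j. (if i = j then 1 else 0) * x j) UNIV = x i"
proof -
  have "infsum (\<lambda>j. (if i = j then 1 else 0) * x j) UNIV = infsum (\<lambda>j. (if i = j then 1 else 0) * x j) {i}"
    by (rule infsum_cong_neutral) auto
  then show ?thesis by simp
qed

lemma summable_on_powr_abs_int:
  fixes \<sigma> :: real
  assumes s0: "0 < \<sigma>" and s1: "\<sigma> < 1"
  shows "(\<lambda>k::int. \<sigma> powr real_of_int \<bar>k\<bar>) summable_on UNIV"
proof -
  define f where "f k = \<sigma> powr real_of_int \<bar>k\<bar>" for k :: int
  have g1: "(\<lambda>n::nat. \<sigma> ^ n) summable_on UNIV"
    by (rule summable_nonneg_imp_summable_on) (use s0 s1 summable_geometric[of \<sigma>] in auto)
  have g2: "(\<lambda>n::nat. \<sigma> * \<sigma> ^ n) summable_on UNIV" using summable_on_cmult_right[OF g1] by blast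
  have A: "f summable_on range int"
  proof (subst summable_on_reindex)
    have "f \<circ> int = (\<lambda>n. \<sigma> ^ n)" unfolding f_def o_def using s0 by (auto simp: powr_realpow)
    then show "(f \<circ> int) summable_on UNIV" using g1 by simp
  qed simp
  have B: "f summable_on range (\<lambda>n::nat. - int n - 1)"
  proof (subst summable_on_reindex)
    have "\<bar>- int n - 1\<bar> = int (Suc n)" for n by simp
    then have "f \<circ> (\<lambda>n::nat. - int n - 1) = (\<lambda>n. \<sigma> * \<sigma> ^ n)"
      unfolding f_def o_def using s0 by (simp only: of_int_of_nat_eq powr_realpow) simp
    then show "(f \<circ> (\<lambda>n::nat. - int n - 1)) summable_on UNIV" using g2 by simp
  qed (auto simp: inj_on_def)
  have "k \<in> range int \<union> range (\<lambda>n::nat. - int n - 1)" for k :: int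
  proof (cases "k \<ge> 0")
    case True then show ?thesis by (auto intro!: image_eqI[of _ _ "nat k"])
  next
    case False then have "k = - int (nat (- k - 1)) - 1" by simp
    then show ?thesis by blast
  qed
  then have U: "range int \<union> range (\<lambda>n::nat. - int n - 1) = (UNIV :: int set)" by blast
  have "f summable_on (range int \<union> range (\<lambda>n::nat. - int n - 1))"
    by (rule summable_on_Un_disjoint[OF A B]) auto
  then show ?thesis unfolding U f_def .
qed

lemma convolution_summable_on:
  fixes g :: "int \<Rightarrow> real"
  assumes g0: "\<And>k. g k \<ge> 0" and gs: "g summable_on UNIV"
    and c: "\<And>j. 0 \<le> c j" "\<And>j. c j \<le> X"
  shows "(\<lambda>j. g (i - j) * c j) summable_on UNIV"
proof (rule summable_on_comparison_test)
  show "(\<lambda>j. g (i - j) * X) summable_on UNIV"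
    using summable_on_cmult_left[of "\<lambda>j. g (i - j)" UNIV X] summable_on_reflect_int_iff[of g i] gs by simp
  show "g (i - j) * c j \<le> g (i - j) * X" "0 \<le> g (i - j) * c j" for j
    using g0[of "i - j"] c[of j] by (simp_all add: mult_left_mono)
qed

lemma convolution_infsum_le:
  fixes g :: "int \<Rightarrow> real"
  assumes g0: "\<And>k. g k \<ge> 0" and gs: "g summable_on UNIV"
    and c: "\<And>j. 0 \<le> c j" "\<And>j. c j \<le> X"
  shows "infsum (\<lambda>j. g (i - j) * c j) UNIV \<le> X * infsum g UNIV"
proof -
  have s1: "(\<lambda>j. g (i - j) * X) summable_on UNIV"
    using summable_on_cmult_left[of "\<lambda>j. g (i - j)" UNIV X] summable_on_reflect_int_iff[of g i] gs by simp
  have "infsum (\<lambda>j. g (i - j) * c j) UNIV \<le> infsum (\<lambda>j. g (i - j) * X) UNIV"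
    by (rule infsum_mono[OF convolution_summable_on[OF g0 gs c] s1]) (use g0 c in \<open>auto intro: mult_left_mono\<close>)
  also have "\<dots> = infsum g UNIV * X"
    using infsum_cmult_left[of X "\<lambda>j. g (i - j)" UNIV] summable_on_reflect_int_iff[of g i] gs
      infsum_reflect_int[of g i] by simp
  finally show ?thesis by (simp add: mult.commute)
qed

lemma sum_convolution_le:
  fixes g a :: "int \<Rightarrow> real"
  assumes g0: "\<And>k. g k \<ge> 0" and gs: "g summable_on UNIV"
    and a0: "\<And>j. a j \<ge> 0" and as: "a summable_on UNIV" and ab: "\<And>j. a j \<le> X" and F: "finite F"
  shows "(\<Sum>i\<in>F. infsum (\<lambda>j. g (i - j) * a j) UNIV) \<le> infsum g UNIV * infsum a UNIV"
proof -
  have sk: "(\<lambda>j. g (i - j) * a j) summable_on UNIV" for i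
    by (rule convolution_summable_on[OF g0 gs a0 ab])
  have "(\<Sum>i\<in>F. infsum (\<lambda>j. g (i - j) * a j) UNIV) = infsum (\<lambda>j. \<Sum>i\<in>F. g (i - j) * a j) UNIV"
    by (rule sum_infsum_commute[OF F sk])
  also have "\<dots> \<le> infsum (\<lambda>j. infsum g UNIV * a j) UNIV"
  proof (rule infsum_mono)
    show "(\<lambda>j. \<Sum>i\<in>F. g (i - j) * a j) summable_on UNIV"
      by (rule summable_on_sum_family[OF F sk])
    show "(\<lambda>j. infsum g UNIV * a j) summable_on UNIV" using summable_on_cmult_right[OF as] by blast
    fix j
    have "(\<Sum>i\<in>F. g (i - j)) = sum g ((\<lambda>i. i - j) ` F)"
      by (subst sum.reindex) (auto simp: inj_on_def)
    also have "\<dots> \<le> infsum g UNIV"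
      by (rule finite_sum_le_infsum[OF gs]) (use F g0 in auto)
    finally show "(\<Sum>i\<in>F. g (i - j) * a j) \<le> infsum g UNIV * a j"
      using a0[of j] by (simp add: sum_distrib_right[symmetric] mult_right_mono)
  qed
  also have "\<dots> = infsum g UNIV * infsum a UNIV" using infsum_cmult_right[of _ a UNIV] as by simp
  finally show ?thesis .
qed

lemma real_of_ereal_ge_1: "1 \<le> p \<Longrightarrow> p \<noteq> \<infinity> \<Longrightarrow> real_of_ereal p \<ge> 1"
  by (cases p) auto

lemma mem_lp_finite: "p \<noteq> \<infinity> \<Longrightarrow> x \<in> lp p \<longleftrightarrow> (\<lambda>n. norm (x n) powr real_of_ereal p) summable_on UNIV"
  by (simp add: lp_def)

lemma mem_lp_infinity: "x \<in> lp \<infinity> \<longleftrightarrow> bounded (range x)"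
  by (simp add: lp_def)

lemma lp_norm_finite: "p \<noteq> \<infinity> \<Longrightarrow> lp_norm p x =
   (infsum (\<lambda>n. norm (x n) powr real_of_ereal p) UNIV) powr (1 / real_of_ereal p)"
  by (simp add: lp_norm_def)

lemma lp_norm_infinity: "lp_norm \<infinity> x = (SUP n. norm (x n))"
  by (simp add: lp_norm_def)

lemma norm_le_lp_norm:
  assumes p: "1 \<le> p" and x: "x \<in> lp p"
  shows "norm (x n) \<le> lp_norm p x"
proof (cases "p = \<infinity>")
  case True
  then have "bounded (range x)" using x mem_lp_infinity by simp
  then have "bdd_above (range (\<lambda>n. norm (x n)))"
    unfolding bounded_iff bdd_above_def by auto
  then show ?thesis using True by (auto simp: lp_norm_infinity intro!: cSUP_upper)
next
  case False
  define P where "P = real_of_ereal p"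
  have P: "P \<ge> 1" using real_of_ereal_ge_1[OF p False] P_def by simp
  have s: "(\<lambda>n. norm (x n) powr P) summable_on UNIV" using x False mem_lp_finite P_def by auto
  have "norm (x n) powr P \<le> infsum (\<lambda>n. norm (x n) powr P) UNIV"
    using finite_sum_le_infsum[OF s, of "{n}"] by simp
  then have "(norm (x n) powr P) powr (1 / P) \<le> (infsum (\<lambda>n. norm (x n) powr P) UNIV) powr (1 / P)"
    using P by (intro powr_mono2) auto
  then show ?thesis using False P by (simp add: lp_norm_finite P_def powr_powr)
qed

lemma lp_norm_nonneg:
  assumes p: "1 \<le> p" and x: "x \<in> lp p"
  shows "0 \<le> lp_norm p x"
  using norm_le_lp_norm[OF p x, of 0] norm_ge_zero order_trans by blast

lemma lp_finite_support:
  assumes p: "1 \<le> p" and F: "finite F" and z: "\<And>i. i \<notin> F \<Longrightarrow> x i = 0"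
  shows "x \<in> lp p"
proof (cases "p = \<infinity>")
  case True
  obtain B where B: "\<And>i. i \<in> F \<Longrightarrow> norm (x i) \<le> B"
    using finite_imp_bounded[of "x ` F"] F unfolding bounded_iff by auto
  have "norm (x i) \<le> max B 0" for i using B[of i] z[of i] by (cases "i \<in> F") auto
  then show ?thesis using True mem_lp_infinity unfolding bounded_iff by auto
next
  case False
  have "(\<lambda>n. norm (x n) powr real_of_ereal p) summable_on UNIV"
    by (rule summable_on_cong_neutral[where S=F, THEN iffD1]) (use z F in auto)
  then show ?thesis using False mem_lp_finite by simp
qed

lemma lp_norm_finite_support:
  assumes p: "p \<noteq> \<infinity>" and F: "finite F" and z: "\<And>i. i \<notin> F \<Longrightarrow> x i = 0"
  shows "lp_norm p x = (\<Sum>i\<in>F. norm (x i) powr real_of_ereal p) powr (1 / real_of_ereal p)"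
proof -
  have "infsum (\<lambda>n. norm (x n) powr real_of_ereal p) UNIV = infsum (\<lambda>n. norm (x n) powr real_of_ereal p) F"
    by (rule infsum_cong_neutral) (use z in auto)
  then show ?thesis using p F by (simp add: lp_norm_finite)
qed

lemma lp_zero: "1 \<le> p \<Longrightarrow> (\<lambda>_. 0) \<in> lp p"
  by (rule lp_finite_support[of p "{}"]) auto

lemma lp_norm_zero: "lp_norm p (\<lambda>_. 0) = 0"
  by (cases "p = \<infinity>") (auto simp: lp_norm_infinity lp_norm_finite)

lemma convolution_powr_le:
  fixes g :: "int \<Rightarrow> real"
  assumes P: "1 \<le> P" and g0: "\<And>k. g k \<ge> 0" and gs: "g summable_on UNIV"
    and xb: "\<And>j. norm (x j) \<le> X"
    and y: "norm (y i) \<le> infsum (\<lambda>j. g (i - j) * norm (x j)) UNIV"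
  shows "norm (y i) powr P \<le> (infsum g UNIV) powr (P - 1) * infsum (\<lambda>j. g (i - j) * norm (x j) powr P) UNIV"
proof -
  have xPb: "norm (x j) powr P \<le> X powr P" for j
    using xb P by (intro powr_mono2) auto
  have "norm (y i) powr P \<le> (infsum (\<lambda>j. g (i - j) * norm (x j)) UNIV) powr P"
    using y P by (intro powr_mono2) auto
  also have "\<dots> \<le> (infsum (\<lambda>j. g (i - j)) UNIV) powr (P - 1) * infsum (\<lambda>j. g (i - j) * norm (x j) powr P) UNIV"
    by (rule Jensen_infsum_powr)
       (use g0 P summable_on_reflect_int_iff[of g i] gs xb xPb
            convolution_summable_on[OF g0 gs, of "\<lambda>j. norm (x j)" X i]
            convolution_summable_on[OF g0 gs, of "\<lambda>j. norm (x j) powr P" "X powr P" i] in auto)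
  finally show ?thesis unfolding infsum_reflect_int .
qed

lemma sum_convolution_powr_le:
  fixes x y :: "int \<Rightarrow> complex" and g :: "int \<Rightarrow> real"
  assumes p: "1 \<le> p" "p \<noteq> \<infinity>" and x: "x \<in> lp p" and g0: "\<And>k. g k \<ge> 0" and gs: "g summable_on UNIV"
    and y: "\<And>i. norm (y i) \<le> infsum (\<lambda>j. g (i - j) * norm (x j)) UNIV" and F: "finite F"
  shows "(\<Sum>i\<in>F. norm (y i) powr real_of_ereal p)
    \<le> infsum g UNIV powr real_of_ereal p * infsum (\<lambda>j. norm (x j) powr real_of_ereal p) UNIV"
proof -
  define P where "P = real_of_ereal p"
  define S where "S = infsum g UNIV"
  define a where "a j = norm (x j) powr P" for j
  have P: "P \<ge> 1" using real_of_ereal_ge_1[OF p] P_def by simp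
  have S0: "S \<ge> 0" unfolding S_def by (rule infsum_nonneg) (use g0 in auto)
  have xb: "norm (x j) \<le> lp_norm p x" for j by (rule norm_le_lp_norm[OF p(1) x])
  have as: "a summable_on UNIV" using x p(2) mem_lp_finite[of p x] unfolding P_def a_def[abs_def] by auto
  have a0: "a j \<ge> 0" and ab: "a j \<le> lp_norm p x powr P" for j
    unfolding a_def using xb P by (auto intro: powr_mono2)
  have "(\<Sum>i\<in>F. norm (y i) powr P) \<le> (\<Sum>i\<in>F. S powr (P - 1) * infsum (\<lambda>j. g (i - j) * a j) UNIV)"
    unfolding S_def a_def by (rule sum_mono, rule convolution_powr_le[OF P g0 gs xb y])
  also have "\<dots> \<le> S powr (P - 1) * (S * infsum a UNIV)"
    unfolding sum_distrib_left[symmetric] S_def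
    by (rule mult_left_mono[OF sum_convolution_le[OF g0 gs a0 as ab F]]) simp
  also have "S powr (P - 1) * (S * infsum a UNIV) = S powr P * infsum a UNIV"
    using S0 P powr_add[of S "P - 1" 1] by (cases "S = 0") auto
  finally show ?thesis unfolding S_def P_def a_def .
qed

lemma lp_convolution_dominated:
  fixes x y :: "int \<Rightarrow> complex" and g :: "int \<Rightarrow> real"
  assumes p: "1 \<le> p" and x: "x \<in> lp p" and g0: "\<And>k. g k \<ge> 0" and gs: "g summable_on UNIV"
    and y: "\<And>i. norm (y i) \<le> infsum (\<lambda>j. g (i - j) * norm (x j)) UNIV"
  shows "y \<in> lp p \<and> lp_norm p y \<le> infsum g UNIV * lp_norm p x"
proof -
  define X where "X = lp_norm p x"
  define S where "S = infsum g UNIV"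
  have xb: "norm (x j) \<le> X" for j unfolding X_def by (rule norm_le_lp_norm[OF p x])
  have S0: "S \<ge> 0" unfolding S_def by (rule infsum_nonneg) (use g0 in auto)
  show ?thesis
  proof (cases "p = \<infinity>")
    case True
    have yb: "norm (y i) \<le> S * X" for i
      using y[of i] convolution_infsum_le[OF g0 gs, of "\<lambda>j. norm (x j)" X i] xb
      unfolding S_def by (auto simp: mult.commute)
    then have "bounded (range y)" unfolding bounded_iff by auto
    then have "y \<in> lp p" using True mem_lp_infinity by simp
    moreover have "lp_norm p y \<le> S * X"
      unfolding True lp_norm_infinity by (rule cSUP_least) (use yb in auto)
    ultimately show ?thesis unfolding S_def X_def by simp
  next
    case False
    define P where "P = real_of_ereal p"
    define A where "A = infsum (\<lambda>j. norm (x j) powr P) UNIV"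
    have P: "P \<ge> 1" using real_of_ereal_ge_1[OF p False] P_def by simp
    have A0: "A \<ge> 0" unfolding A_def by (rule infsum_nonneg) simp
    note fin = sum_convolution_powr_le[OF p False x g0 gs y, folded P_def S_def A_def]
    have ys: "(\<lambda>i. norm (y i) powr P) summable_on UNIV"
      by (rule nonneg_bdd_above_summable_on) (use fin in \<open>auto intro!: bdd_aboveI2\<close>)
    have "lp_norm p y = (infsum (\<lambda>i. norm (y i) powr P) UNIV) powr (1 / P)"
      using False by (simp add: lp_norm_finite P_def)
    also have "\<dots> \<le> (S powr P * A) powr (1 / P)"
      using infsum_le_finite_sums[OF ys fin] P unfolding A_def by (intro powr_mono2) (auto intro!: infsum_nonneg)
    also have "\<dots> = S * X"
      using S0 A0 P False by (simp add: powr_mult powr_powr X_def A_def lp_norm_finite P_def)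
    finally have "lp_norm p y \<le> S * X" .
    moreover have "y \<in> lp p" using ys False mem_lp_finite P_def by auto
    ultimately show ?thesis unfolding S_def X_def by simp
  qed
qed

lemma lp_dominated:
  assumes p: "1 \<le> p" and x: "x \<in> lp p" and b: "\<And>i. norm (y i) \<le> norm (x i)"
  shows "y \<in> lp p \<and> lp_norm p y \<le> lp_norm p x"
proof -
  define g :: "int \<Rightarrow> real" where "g k = (if k = 0 then 1 else 0)" for k
  have gs: "g summable_on UNIV"
    by (rule summable_on_cong_neutral[where S="{0}", THEN iffD1]) (auto simp: g_def)
  have gi: "infsum g UNIV = 1"
    using infsum_cong_neutral[of "{0}" UNIV g g] by (auto simp: g_def)
  have "infsum (\<lambda>j. g (i - j) * norm (x j)) UNIV = norm (x i)" for i
  proof -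
    have "(\<lambda>j. g (i - j) * norm (x j)) = (\<lambda>j. (if i = j then 1 else 0) * norm (x j))"
      unfolding g_def by auto
    then show ?thesis using infsum_kronecker[of i "\<lambda>j. norm (x j)"] by simp
  qed
  then show ?thesis using lp_convolution_dominated[OF p x _ gs, of y] b gi by (auto simp: g_def)
qed

lemma lp_opnorm_le:
  assumes p: "1 \<le> p" and T: "\<And>x. x \<in> lp p \<Longrightarrow> T x \<in> lp p \<and> lp_norm p (T x) \<le> B * lp_norm p x"
    and B0: "0 \<le> B"
  shows "0 \<le> lp_opnorm p T \<and> lp_opnorm p T \<le> B"
proof -
  define S where "S = {lp_norm p (T x) | x. x \<in> lp p \<and> lp_norm p x \<le> 1}"
  have mem: "lp_norm p (T (\<lambda>_. 0)) \<in> S" unfolding S_def using lp_zero[OF p] lp_norm_zero by auto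
  have ub: "y \<le> B" if yS: "y \<in> S" for y
  proof -
    obtain x where x: "y = lp_norm p (T x)" "x \<in> lp p" "lp_norm p x \<le> 1" using yS unfolding S_def by auto
    have "lp_norm p (T x) \<le> B * lp_norm p x" using T[OF x(2)] by simp
    also have "\<dots> \<le> B" using B0 x(3) by (simp add: mult_left_le)
    finally show ?thesis using x by simp
  qed
  have "0 \<le> lp_norm p (T (\<lambda>_. 0))" using lp_norm_nonneg[OF p] T[OF lp_zero[OF p]] by simp
  also have "\<dots> \<le> Sup S" by (rule cSup_upper[OF mem]) (use ub in \<open>auto simp: bdd_above_def\<close>)
  finally have "0 \<le> Sup S" .
  moreover have "Sup S \<le> B" by (rule cSup_least) (use mem ub in auto)
  ultimately show ?thesis unfolding lp_opnorm_def S_def by simp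
qed

section \<open>The difference equation \<open>Hu = 0\<close>\<close>

definition is_solution :: "(int \<Rightarrow> real) \<Rightarrow> (int \<Rightarrow> complex) \<Rightarrow> bool" where
  "is_solution v u \<longleftrightarrow> (\<forall>n. u (n + 1) + u (n - 1) + complex_of_real (v n) * u n = 0)"

definition wronskian :: "(int \<Rightarrow> complex) \<Rightarrow> (int \<Rightarrow> complex) \<Rightarrow> int \<Rightarrow> complex" where
  "wronskian u w j = u j * w (j + 1) - u (j + 1) * w j"

lemma is_solution_iff_schroedinger: "is_solution v u \<longleftrightarrow> schroedinger v u = (\<lambda>_. 0)"
  unfolding is_solution_def schroedinger_def fun_eq_iff by simp

lemma is_solution_step:
  assumes "is_solution v u"
  shows "u (n + 1) = - u (n - 1) - complex_of_real (v n) * u n"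
  using assms[unfolded is_solution_def, rule_format, of n] by (simp add: eq_neg_iff_add_eq_0 algebra_simps)

lemma is_solution_lin_comb:
  assumes "is_solution v u" "is_solution v w"
  shows "is_solution v (\<lambda>n. a * u n + b * w n)"
proof -
  have "a * u (n + 1) + b * w (n + 1) + (a * u (n - 1) + b * w (n - 1)) + complex_of_real (v n) * (a * u n + b * w n)
     = a * (u (n + 1) + u (n - 1) + complex_of_real (v n) * u n) + b * (w (n + 1) + w (n - 1) + complex_of_real (v n) * w n)"
    for n by (simp add: algebra_simps)
  then show ?thesis using assms unfolding is_solution_def by simp
qed

lemma solution_zero_if_consecutive_zeros:
  assumes u: "is_solution v u" and z: "u m = 0" "u (m - 1) = 0"
  shows "u n = 0"
proof -
  have "u i = 0 \<and> u (i - 1) = 0" for i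
  proof (induction i rule: int_induct[where k=m])
    case base then show ?case using z by simp
  next
    case (step1 i)
    then show ?case using is_solution_step[OF u, of i] by simp
  next
    case (step2 i)
    have "u (i - 1 + 1) + u (i - 1 - 1) + complex_of_real (v (i - 1)) * u (i - 1) = 0"
      using u unfolding is_solution_def by blast
    then show ?case using step2 by simp
  qed
  then show ?thesis by blast
qed

lemma wronskian_const:
  assumes u: "is_solution v u" and w: "is_solution v w"
  shows "wronskian u w j = wronskian u w k"
proof -
  have step: "wronskian u w i = wronskian u w (i - 1)" for i
    unfolding wronskian_def is_solution_step[OF u, of i] is_solution_step[OF w, of i]
    by (simp add: algebra_simps)
  have "wronskian u w i = wronskian u w 0" for i
  proof (induction i rule: int_induct[where k=0])
    case (step1 i) then show ?case using step[of "i + 1"] by simp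
  next
    case (step2 i) then show ?case using step[of i] by simp
  qed simp
  then show ?thesis by metis
qed

lemma wronskian_lin_comb:
  "wronskian (\<lambda>n. a * u n + b * w n) (\<lambda>n. c * u n + d * w n) j = (a * d - b * c) * wronskian u w j"
  unfolding wronskian_def by (simp add: algebra_simps)

text \<open>For a solution \<open>u\<close>, \<open>propagate v (u 0, u (-1)) k = (u k, u (k - 1))\<close>: this is the action of
  the transfer matrices \<open>transfer (v (k - 1)) ** \<dots> ** transfer (v 0)\<close> on pairs of consecutive values.\<close>
fun propagate :: "(int \<Rightarrow> real) \<Rightarrow> complex \<times> complex \<Rightarrow> nat \<Rightarrow> complex \<times> complex" where
  "propagate v w 0 = w"
| "propagate v w (Suc k) =
     (- complex_of_real (v (int k)) * fst (propagate v w k) - snd (propagate v w k), fst (propagate v w k))"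

lemma propagate_solution:
  assumes u: "is_solution v u"
  shows "propagate (\<lambda>n. v (n + m)) (u m, u (m - 1)) k = (u (m + int k), u (m + int k - 1))"
proof (induction k)
  case (Suc k)
  have "u (m + int k + 1) = - u (m + int k - 1) - complex_of_real (v (m + int k)) * u (m + int k)"
    by (rule is_solution_step[OF u])
  then show ?case using Suc by (simp add: add.commute add.left_commute)
qed simp

lemma propagate_linear:
  "propagate v (x1, x2) k = (x1 * fst (propagate v (1, 0) k) + x2 * fst (propagate v (0, 1) k),
                            x1 * snd (propagate v (1, 0) k) + x2 * snd (propagate v (0, 1) k))"
  by (induction k) (simp_all add: algebra_simps)

lemma propagate_scale:
  "propagate v (c * x1, c * x2) k = (c * fst (propagate v (x1, x2) k), c * snd (propagate v (x1, x2) k))"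
  by (induction k) (simp_all add: algebra_simps)

lemma propagate_det:
  "fst (propagate v (1, 0) k) * snd (propagate v (0, 1) k) - snd (propagate v (1, 0) k) * fst (propagate v (0, 1) k) = 1"
  by (induction k) (simp_all add: algebra_simps)

lemma monodromy_eq_propagate:
  "complex_of_real (monodromy v k $ 1 $ 1) = fst (propagate v (1, 0) k)
 \<and> complex_of_real (monodromy v k $ 2 $ 1) = snd (propagate v (1, 0) k)
 \<and> complex_of_real (monodromy v k $ 1 $ 2) = fst (propagate v (0, 1) k)
 \<and> complex_of_real (monodromy v k $ 2 $ 2) = snd (propagate v (0, 1) k)"
  by (induction k) (simp_all add: mat_def matrix_matrix_mult_def sum_2 transfer_def)

lemma trace_monodromy:
  "complex_of_real (trace (monodromy v k)) = fst (propagate v (1, 0) k) + snd (propagate v (0, 1) k)"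
  using monodromy_eq_propagate[of v k] by (simp add: trace_def sum_2)

lemma propagate_eigenvector:
  assumes mu: "\<mu>\<^sup>2 - (fst (propagate v (1, 0) K) + snd (propagate v (0, 1) K)) * \<mu> + 1 = 0"
  obtains w where "w \<noteq> (0, 0)" "propagate v w K = (\<mu> * fst w, \<mu> * snd w)"
proof -
  define a where "a = fst (propagate v (1, 0) K)"
  define c where "c = snd (propagate v (1, 0) K)"
  define b where "b = fst (propagate v (0, 1) K)"
  define d where "d = snd (propagate v (0, 1) K)"
  have det: "a * d - c * b = 1" unfolding a_def b_def c_def d_def by (rule propagate_det)
  have lin: "propagate v (x1, x2) K = (x1 * a + x2 * b, x1 * c + x2 * d)" for x1 x2
    unfolding a_def b_def c_def d_def by (rule propagate_linear)
  have m2: "\<mu>\<^sup>2 = (a + d) * \<mu> - 1" using mu unfolding a_def d_def by (simp add: algebra_simps eq_diff_eq)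
  consider "c \<noteq> 0" | "c = 0" "b \<noteq> 0" | "c = 0" "b = 0" "\<mu> = a" | "c = 0" "b = 0" "\<mu> = d"
  proof (cases "c = 0 \<and> b = 0")
    case True
    then have "(\<mu> - a) * (\<mu> - d) = 0" using m2 det by (simp add: algebra_simps power2_eq_square)
    then show ?thesis using True that by auto
  qed (use that in blast)
  then show ?thesis
  proof cases
    case 1
    have "propagate v (\<mu> - d, c) K = (\<mu> * (\<mu> - d), \<mu> * c)"
      unfolding lin using det m2 by (simp add: algebra_simps power2_eq_square)
    then show ?thesis using 1 that[of "(\<mu> - d, c)"] by auto
  next
    case 2
    have "(\<mu> - a) * (\<mu> - d) = 0" using m2 det 2 by (simp add: algebra_simps power2_eq_square)
    then have "propagate v (b, \<mu> - a) K = (\<mu> * b, \<mu> * (\<mu> - a))"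
      unfolding lin using 2 by (simp add: algebra_simps)
    then show ?thesis using 2 that[of "(b, \<mu> - a)"] by auto
  next
    case 3
    then show ?thesis using lin[of 1 0] that[of "(1, 0)"] by simp
  next
    case 4
    then show ?thesis using lin[of 0 1] that[of "(0, 1)"] by simp
  qed
qed

lemma periodic_shift:
  assumes per: "\<forall>n. v (n + int K) = v n"
  shows "v (n + int K * q) = v n"
proof (induction q rule: int_induct[where k=0])
  case (step1 i)
  have "v (n + int K * (i + 1)) = v (n + int K * i + int K)" by (simp add: algebra_simps)
  then show ?case using per step1 by simp
next
  case (step2 i)
  have "v (n + int K * i) = v (n + int K * (i - 1) + int K)" by (simp add: algebra_simps)
  then show ?case using per step2 by simp
qed simp

lemma periodic_mod:
  assumes per: "\<forall>n. v (n + int K) = v n"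
  shows "v (n mod int K) = v n"
  using periodic_shift[OF per, of "n mod int K" "n div int K"] by simp

lemma periodic_bounded:
  fixes v :: "int \<Rightarrow> real"
  assumes K: "K \<ge> 1" and per: "\<forall>n. v (n + int K) = v n"
  shows "\<bar>v n\<bar> \<le> (\<Sum>r<K. \<bar>v (int r)\<bar>)"
proof -
  have "nat (n mod int K) < K" using K by (simp add: nat_less_iff)
  moreover have "v n = v (int (nat (n mod int K)))" using periodic_mod[OF per, of n] K by simp
  ultimately show ?thesis using member_le_sum[of "nat (n mod int K)" "{..<K}" "\<lambda>r. \<bar>v (int r)\<bar>"] by simp
qed

text \<open>The Floquet solution with multiplier \<open>\<mu>\<close> and initial data \<open>w = (u 0, u (-1))\<close>.\<close>
definition bloch :: "(int \<Rightarrow> real) \<Rightarrow> nat \<Rightarrow> complex \<Rightarrow> complex \<times> complex \<Rightarrow> int \<Rightarrow> complex" where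
  "bloch v K \<mu> w n = \<mu> powi (n div int K) * fst (propagate v w (nat (n mod int K)))"

lemma bloch_shift:
  assumes K: "K \<ge> 1" and mu: "\<mu> \<noteq> 0"
  shows "bloch v K \<mu> w (n + int K * q) = \<mu> powi q * bloch v K \<mu> w n"
proof -
  have "(n + int K * q) div int K = n div int K + q" "(n + int K * q) mod int K = n mod int K"
    using K by simp_all
  then show ?thesis unfolding bloch_def using mu by (simp add: power_int_add)
qed

lemma bloch_norm:
  "norm (bloch v K \<mu> w n) = norm \<mu> powi (n div int K) * norm (fst (propagate v w (nat (n mod int K))))"
  unfolding bloch_def by (simp add: norm_mult norm_power_int)

lemma bloch_window:
  assumes K: "K \<ge> 1" and mu: "\<mu> \<noteq> 0" and eig: "propagate v w K = (\<mu> * fst w, \<mu> * snd w)"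
    and k: "k \<le> K"
  shows "bloch v K \<mu> w (int k) = fst (propagate v w k)"
    and "bloch v K \<mu> w (int k - 1) = snd (propagate v w k)"
proof -
  have cur: "bloch v K \<mu> w (int j) = fst (propagate v w j)" if "j \<le> K" for j
  proof (cases "j = K")
    case True
    then show ?thesis unfolding bloch_def using K eig by simp
  qed (use that in \<open>simp add: bloch_def\<close>)
  show "bloch v K \<mu> w (int k) = fst (propagate v w k)" by (rule cur[OF k])
  show "bloch v K \<mu> w (int k - 1) = snd (propagate v w k)"
  proof (cases k)
    case 0
    have "(-1::int) div int K = -1" "(-1::int) mod int K = int K - 1"
      using K by (simp_all add: div_eq_minus1 zmod_minus1)
    moreover have "nat (int K - 1) = K - 1" using K by simp
    ultimately have "bloch v K \<mu> w (-1) = \<mu> powi (-1) * fst (propagate v w (K - 1))"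
      unfolding bloch_def by simp
    also have "fst (propagate v w (K - 1)) = \<mu> * snd w"
      using eig K by (cases K) auto
    finally show ?thesis using 0 mu by (simp add: power_int_minus field_simps)
  next
    case (Suc j)
    then show ?thesis using cur[of j] k by simp
  qed
qed

lemma bloch_is_solution:
  assumes K: "K \<ge> 1" and per: "\<forall>n. v (n + int K) = v n" and mu: "\<mu> \<noteq> 0"
    and eig: "propagate v w K = (\<mu> * fst w, \<mu> * snd w)"
  shows "is_solution v (bloch v K \<mu> w)"
  unfolding is_solution_def
proof
  fix n
  define b where "b = bloch v K \<mu> w"
  define q where "q = n div int K"
  define r where "r = nat (n mod int K)"
  have rK: "r < K" and n: "n = int r + int K * q"
    unfolding r_def q_def using K by (simp_all add: nat_less_iff)
  have "b (int r + 1) = fst (propagate v w (Suc r))"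
    using bloch_window(1)[OF K mu eig, of "Suc r"] rK unfolding b_def by (simp add: add.commute)
  then have window: "b (int r + 1) + b (int r - 1) + complex_of_real (v (int r)) * b (int r) = 0"
    using bloch_window[OF K mu eig, of r] rK unfolding b_def by simp
  have shift: "b (m + int K * q) = \<mu> powi q * b m" for m
    unfolding b_def by (rule bloch_shift[OF K mu])
  have "n + 1 = (int r + 1) + int K * q" "n - 1 = (int r - 1) + int K * q" using n by simp_all
  then have "b (n + 1) = \<mu> powi q * b (int r + 1)" "b (n - 1) = \<mu> powi q * b (int r - 1)"
    by (simp_all only: shift)
  moreover have "b n = \<mu> powi q * b (int r)" using n by (simp only: shift)
  moreover have "v n = v (int r)" using periodic_shift[OF per, of "int r" q] n by simp
  ultimately have "b (n + 1) + b (n - 1) + complex_of_real (v n) * b n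
      = \<mu> powi q * (b (int r + 1) + b (int r - 1) + complex_of_real (v (int r)) * b (int r))"
    by (simp only: distrib_left mult.left_commute)
  with window show "b (n + 1) + b (n - 1) + complex_of_real (v n) * b n = 0"
    by simp
qed

lemma bloch_init:
  assumes K: "K \<ge> 1" and mu: "\<mu> \<noteq> 0" and eig: "propagate v w K = (\<mu> * fst w, \<mu> * snd w)"
  shows "bloch v K \<mu> w 0 = fst w" and "bloch v K \<mu> w (-1) = snd w"
  using bloch_window[OF K mu eig, of 0] by simp_all

lemma wronskian_bloch_ne_0:
  assumes K: "K \<ge> 1" and mu: "\<mu> \<noteq> 0" "\<mu>' \<noteq> 0" "\<mu> \<noteq> \<mu>'"
    and per: "\<forall>n. v (n + int K) = v n"
    and eig: "propagate v w K = (\<mu> * fst w, \<mu> * snd w)" "w \<noteq> (0, 0)"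
    and eig': "propagate v w' K = (\<mu>' * fst w', \<mu>' * snd w')" "w' \<noteq> (0, 0)"
  shows "wronskian (bloch v K \<mu> w) (bloch v K \<mu>' w') 0 \<noteq> 0"
proof
  assume "wronskian (bloch v K \<mu> w) (bloch v K \<mu>' w') 0 = 0"
  then have "wronskian (bloch v K \<mu> w) (bloch v K \<mu>' w') (-1) = 0"
    using wronskian_const[OF bloch_is_solution[OF K per mu(1) eig(1)] bloch_is_solution[OF K per mu(2) eig'(1)]]
    by metis
  then have d: "snd w * fst w' = fst w * snd w'"
    unfolding wronskian_def using bloch_init[OF K mu(1) eig(1)] bloch_init[OF K mu(2) eig'(1)] by simp
  obtain \<kappa> where \<kappa>: "w' = (\<kappa> * fst w, \<kappa> * snd w)"
  proof (cases "fst w = 0")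
    case True
    then have "snd w \<noteq> 0" using eig(2) by (cases w) auto
    then show ?thesis using d True that[of "snd w' / snd w"] by (cases w') (auto simp: field_simps)
  next
    case False
    then show ?thesis using d that[of "fst w' / fst w"] by (cases w') (auto simp: field_simps)
  qed
  then have "propagate v w' K = (\<kappa> * (\<mu> * fst w), \<kappa> * (\<mu> * snd w))"
    using propagate_scale[of v \<kappa> "fst w" "snd w" K] eig(1) by simp
  then have "(\<mu>' - \<mu>) * fst w' = 0" "(\<mu>' - \<mu>) * snd w' = 0"
    using eig'(1) \<kappa> by (auto simp: algebra_simps)
  then show False using mu(3) eig'(2) by (cases w') auto
qed

lemma hyperbolic_root:
  fixes t :: real
  assumes "\<bar>t\<bar> > 2"
  obtains s where "s\<^sup>2 - t * s + 1 = 0" "0 < \<bar>s\<bar>" "\<bar>s\<bar> < 1"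
proof -
  have pos: "\<exists>s. s\<^sup>2 - t * s + 1 = 0 \<and> 0 < s \<and> s < 1" if t2: "t > 2" for t :: real
  proof -
    define r where "r = sqrt (t\<^sup>2 - 4)"
    have "t * t > 2 * 2" using t2 by (intro mult_strict_mono) auto
    then have tp: "t\<^sup>2 - 4 > 0" by (simp add: power2_eq_square)
    have r2: "r\<^sup>2 = t\<^sup>2 - 4" and r0: "r > 0" unfolding r_def using tp by simp_all
    have "r < t" using r2 r0 t2 by (smt (verit) power_mono)
    moreover have "t - 2 < r"
    proof -
      have "(t - 2)\<^sup>2 < r\<^sup>2" using r2 t2 by (simp add: power2_eq_square algebra_simps)
      then show ?thesis using r0 t2 by (smt (verit) power_mono)
    qed
    ultimately show ?thesis
      by (intro exI[of _ "(t - r) / 2"]) (use r2 in \<open>auto simp: power2_eq_square field_simps\<close>)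
  qed
  show ?thesis
  proof (cases "t > 2")
    case True then show ?thesis using pos that by force
  next
    case False
    then have "- t > 2" using assms by simp
    then obtain s where "s\<^sup>2 - (- t) * s + 1 = 0" "0 < s" "s < 1" using pos by blast
    then show ?thesis using that[of "-s"] by (simp add: power2_eq_square)
  qed
qed

lemma elliptic_root:
  fixes t :: real
  assumes t: "\<bar>t\<bar> \<le> 2"
  obtains \<mu> :: complex where "\<mu>\<^sup>2 - complex_of_real t * \<mu> + 1 = 0" "norm \<mu> = 1"
proof -
  have t2: "t\<^sup>2 \<le> 4" using t abs_le_square_iff[of t 2] by simp
  define b where "b = sqrt (4 - t\<^sup>2) / 2"
  have b2: "b\<^sup>2 = (4 - t\<^sup>2) / 4" unfolding b_def using t2 by (simp add: power_divide)
  define \<mu> where "\<mu> = Complex (t / 2) b"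
  have "\<mu>\<^sup>2 - complex_of_real t * \<mu> + 1 = 0"
    unfolding \<mu>_def using b2 by (simp add: complex_eq_iff power2_eq_square field_simps)
  moreover have "norm \<mu> = 1" unfolding \<mu>_def cmod_def using b2 by (simp add: power_divide field_simps)
  ultimately show ?thesis using that by blast
qed

section \<open>Bloch solutions do not vanish\<close>

text \<open>Up to scaling, a Bloch solution vanishing at \<open>m\<close> is the Dirichlet solution of the potential
  shifted by \<open>m\<close>, so \<open>\<mu>\<close> is a diagonal entry of the shifted monodromy matrix.\<close>
lemma vanishing_solution_multiplier:
  assumes u: "is_solution v u" and bl: "\<And>n. u (n + int K) = \<mu> * u n"
    and z: "u m = 0" and nz: "u (m - 1) \<noteq> 0"
  shows "fst (propagate (\<lambda>n. v (n + m)) (0, 1) K) = 0"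
    and "snd (propagate (\<lambda>n. v (n + m)) (0, 1) K) = \<mu>"
    and "fst (propagate (\<lambda>n. v (n + m)) (1, 0) K) * \<mu> = 1"
proof -
  define y where "y = u (m - 1)"
  have "propagate (\<lambda>n. v (n + m)) (y * 0, y * 1) K = (u (m + int K), u (m + int K - 1))"
    using propagate_solution[OF u, of m K] z unfolding y_def by simp
  then have e: "y * fst (propagate (\<lambda>n. v (n + m)) (0, 1) K) = u (m + int K)"
               "y * snd (propagate (\<lambda>n. v (n + m)) (0, 1) K) = u (m + int K - 1)"
    unfolding propagate_scale by simp_all
  have "u (m + int K) = 0" using bl[of m] z by simp
  then show f1: "fst (propagate (\<lambda>n. v (n + m)) (0, 1) K) = 0" using e(1) nz y_def by simp
  have "u (m + int K - 1) = \<mu> * y" using bl[of "m - 1"] unfolding y_def by (simp add: algebra_simps)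
  then show f2: "snd (propagate (\<lambda>n. v (n + m)) (0, 1) K) = \<mu>" using e(2) nz y_def by (simp add: mult.commute)
  show "fst (propagate (\<lambda>n. v (n + m)) (1, 0) K) * \<mu> = 1"
    using propagate_det[of "\<lambda>n. v (n + m)" K] f1 f2 by simp
qed

lemma propagate_Ints:
  assumes "\<And>n. w n \<in> \<int>" "fst x \<in> \<int>" "snd x \<in> \<int>"
  shows "fst (propagate w x k) \<in> \<int> \<and> snd (propagate w x k) \<in> \<int>"
proof (induction k)
  case (Suc k)
  have "complex_of_real (w (int k)) \<in> \<int>" using assms(1) by simp
  then show ?case using Suc by (auto intro!: Ints_diff Ints_mult Ints_minus)
qed (use assms in simp)

subsection \<open>Potentials with values in \<open>{0, \<lambda>}\<close>: a finite check\<close>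

text \<open>For a potential taking the values \<open>0\<close> and \<open>\<lambda>\<close> according to a pattern \<open>bs\<close>, the entries of
  \<open>propagate _ (0, 1) k\<close> are integer polynomials in \<open>\<lambda>\<close>, represented by coefficient lists
  (constant term first). By the rational root theorem only finitely many rational \<open>\<lambda>\<close> make the first
  entry vanish, and for all patterns of length at most 8 one checks by evaluation that the second entry
  is then \<open>\<plusminus>1\<close>.\<close>

fun horner :: "int list \<Rightarrow> 'a::comm_ring_1 \<Rightarrow> 'a" where
  "horner [] x = 0"
| "horner (c # cs) x = of_int c + x * horner cs x"

fun coeffs_add :: "int list \<Rightarrow> int list \<Rightarrow> int list" where
  "coeffs_add [] ys = ys"
| "coeffs_add xs [] = xs"
| "coeffs_add (x # xs) (y # ys) = (x + y) # coeffs_add xs ys"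

definition pattern_step :: "bool \<Rightarrow> int list \<times> int list \<Rightarrow> int list \<times> int list" where
  "pattern_step b PQ =
     (coeffs_add (if b then 0 # map uminus (fst PQ) else []) (map uminus (snd PQ)), fst PQ)"

fun pattern_polys :: "bool list \<Rightarrow> nat \<Rightarrow> int list \<times> int list" where
  "pattern_polys bs 0 = ([0], [1])"
| "pattern_polys bs (Suc k) = pattern_step (bs ! k) (pattern_polys bs k)"

definition drop_trailing_zeros :: "int list \<Rightarrow> int list" where
  "drop_trailing_zeros P = rev (dropWhile (\<lambda>c. c = 0) (rev P))"

definition strip_zeros :: "int list \<Rightarrow> int list" where
  "strip_zeros P = dropWhile (\<lambda>c. c = 0) (drop_trailing_zeros P)"

definition unimodular_or_nonroot :: "int list \<Rightarrow> int list \<Rightarrow> rat \<Rightarrow> bool" where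
  "unimodular_or_nonroot P Q r \<longleftrightarrow> horner P r \<noteq> 0 \<or> horner Q r = 1 \<or> horner Q r = -1"

definition check_pattern :: "bool list \<Rightarrow> bool" where
  "check_pattern bs = (let PQ = pattern_polys bs (length bs); P = fst PQ; Q = snd PQ in
     if list_all (\<lambda>c. c = 0) P then drop_trailing_zeros Q = [1] \<or> drop_trailing_zeros Q = [-1]
     else unimodular_or_nonroot P Q 0 \<and>
       (let P' = strip_zeros P in
        list_all (\<lambda>a. list_all (\<lambda>b. a = 0 \<or> unimodular_or_nonroot P Q (of_int a / of_int b))
          [1..\<bar>last P'\<bar>]) [-\<bar>hd P'\<bar>..\<bar>hd P'\<bar>]))"

lemma check_patterns_up_to_8:
  "list_all (\<lambda>K. list_all check_pattern (List.n_lists K [True, False])) [1..<9]"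
  by code_simp

lemma horner_coeffs_add: "horner (coeffs_add xs ys) x = horner xs x + horner ys x"
  by (induction xs ys rule: coeffs_add.induct) (simp_all add: algebra_simps)

lemma horner_uminus: "horner (map uminus xs) x = - horner xs x"
  by (induction xs) (simp_all add: algebra_simps)

lemma horner_append: "horner (xs @ ys) x = horner xs x + x ^ length xs * horner ys x"
  by (induction xs) (simp_all add: algebra_simps)

lemma horner_zeros: "list_all (\<lambda>c. c = 0) xs \<Longrightarrow> horner xs x = 0"
  by (induction xs) auto

lemma horner_of_rat: "horner c (of_rat r :: 'a::field_char_0) = of_rat (horner c r)"
  by (induction c) (simp_all add: of_rat_add of_rat_mult)

lemma horner_drop_trailing_zeros: "horner (drop_trailing_zeros P) x = horner P x"
proof -
  have "P = drop_trailing_zeros P @ rev (takeWhile (\<lambda>c. c = 0) (rev P))"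
    unfolding drop_trailing_zeros_def by (metis rev_append rev_rev_ident takeWhile_dropWhile_id)
  moreover have "list_all (\<lambda>c. c = 0) (rev (takeWhile (\<lambda>c. c = 0) (rev P)))"
    by (simp add: list_all_iff) (meson set_takeWhileD)
  ultimately show ?thesis by (metis add.right_neutral horner_append horner_zeros mult_zero_right)
qed

lemma horner_strip_zeros_eq_0_iff:
  assumes "(x::'a::idom) \<noteq> 0"
  shows "horner (strip_zeros P) x = 0 \<longleftrightarrow> horner P x = 0"
proof -
  let ?Q = "drop_trailing_zeros P"
  have "list_all (\<lambda>c. c = 0) (takeWhile (\<lambda>c. c = 0) ?Q)"
    by (simp add: list_all_iff) (meson set_takeWhileD)
  then have "horner ?Q x = x ^ length (takeWhile (\<lambda>c. c = 0) ?Q) * horner (strip_zeros P) x"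
    unfolding strip_zeros_def
    by (metis add_0 horner_append horner_zeros takeWhile_dropWhile_id)
  then show ?thesis using assms horner_drop_trailing_zeros[of P x] by simp
qed

lemma strip_zeros_nonzero_ends:
  assumes nz: "\<not> list_all (\<lambda>c. c = 0) P"
  shows "strip_zeros P \<noteq> []" "hd (strip_zeros P) \<noteq> 0" "last (strip_zeros P) \<noteq> 0"
proof -
  have d: "dropWhile (\<lambda>c. c = 0) (rev P) \<noteq> []" using nz by (simp add: dropWhile_eq_Nil_conv list_all_iff)
  have lr: "last (drop_trailing_zeros P) \<noteq> 0"
    unfolding drop_trailing_zeros_def using d hd_dropWhile[OF d] by (simp add: last_rev)
  have "drop_trailing_zeros P \<noteq> []" unfolding drop_trailing_zeros_def using d by simp
  then have ne: "\<not> (\<forall>x\<in>set (drop_trailing_zeros P). x = 0)" using lr by auto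
  show sn: "strip_zeros P \<noteq> []" unfolding strip_zeros_def using ne by (simp add: dropWhile_eq_Nil_conv)
  show "hd (strip_zeros P) \<noteq> 0"
    using hd_dropWhile[of "\<lambda>c. c = 0" "drop_trailing_zeros P"] sn unfolding strip_zeros_def by simp
  have "drop_trailing_zeros P = takeWhile (\<lambda>c. c = 0) (drop_trailing_zeros P) @ strip_zeros P"
    unfolding strip_zeros_def by simp
  then have "last (drop_trailing_zeros P) = last (strip_zeros P)" using sn by (metis last_append)
  then show "last (strip_zeros P) \<noteq> 0" using lr by simp
qed

text \<open>\<open>horner_homog c a b = b ^ (length c - 1) * horner c (a / b)\<close>, computed in \<open>\<int>\<close>.\<close>
fun horner_homog :: "int list \<Rightarrow> int \<Rightarrow> int \<Rightarrow> int" where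
  "horner_homog [] a b = 0"
| "horner_homog (c # cs) a b = c * b ^ length cs + a * horner_homog cs a b"

lemma horner_homog_eq:
  assumes b: "b \<noteq> 0" and c: "c \<noteq> []"
  shows "horner c (of_int a / of_int b :: rat) * of_int b ^ (length c - 1) = of_int (horner_homog c a b)"
  using c
proof (induction c)
  case (Cons x cs)
  show ?case
  proof (cases "cs = []")
    case False
    then obtain n where n: "length cs = Suc n" by (cases cs) auto
    have "horner (x # cs) (of_int a / of_int b :: rat) * of_int b ^ (length (x # cs) - 1)
        = of_int x * of_int b ^ length cs + of_int a * (horner cs (of_int a / of_int b) * of_int b ^ (length cs - 1))"
      using b n by (simp add: field_simps)
    then show ?thesis using Cons.IH[OF False] by simp
  qed simp
qed simp

lemma horner_homog_last: "c \<noteq> [] \<Longrightarrow> b dvd (horner_homog c a b - last c * a ^ (length c - 1))"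
proof (induction c)
  case (Cons x cs)
  show ?case
  proof (cases "cs = []")
    case False
    then obtain n where n: "length cs = Suc n" by (cases cs) auto
    have l: "last (x # cs) = last cs" using False by simp
    have pw: "a ^ (length (x # cs) - 1) = a * a ^ (length cs - 1)" using n by simp
    have "horner_homog (x # cs) a b - last (x # cs) * a ^ (length (x # cs) - 1)
        = x * b ^ length cs + a * (horner_homog cs a b - last cs * a ^ (length cs - 1))"
      unfolding l pw by (simp add: algebra_simps)
    moreover have "b dvd x * b ^ length cs" using n by simp
    ultimately show ?thesis using Cons.IH[OF False] by (metis dvd_add dvd_mult)
  qed simp
qed simp

lemma rational_root_dvd:
  assumes c: "c \<noteq> []" and b: "b > 0" and cop: "coprime a b"
    and z: "horner c (of_int a / of_int b :: rat) = 0"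
  shows "a dvd hd c" and "b dvd last c"
proof -
  have h0: "horner_homog c a b = 0" using horner_homog_eq[of b c a] c b z by simp
  obtain x cs where xcs: "c = x # cs" using c by (cases c) auto
  have "a dvd x * b ^ length cs" using h0 unfolding xcs
    by (metis add.commute add_eq_0_iff dvd_minus_iff dvd_triv_left horner_homog.simps(2))
  moreover have "coprime a (b ^ length cs)" using cop by simp
  ultimately show "a dvd hd c" unfolding xcs by (simp add: coprime_dvd_mult_left_iff)
  have "b dvd last c * a ^ (length c - 1)" using horner_homog_last[OF c, of b a] h0 by simp
  moreover have "coprime b (a ^ (length c - 1))" using cop by (simp add: coprime_commute)
  ultimately show "b dvd last c" by (simp add: coprime_dvd_mult_left_iff)
qed

lemma rational_root_candidates:
  fixes r :: rat
  assumes P: "\<not> list_all (\<lambda>c. c = 0) P" and z: "horner P r = 0" and r: "r \<noteq> 0"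
  obtains a b where "r = of_int a / of_int b" "a \<noteq> 0"
    "a \<in> set [-\<bar>hd (strip_zeros P)\<bar>..\<bar>hd (strip_zeros P)\<bar>]" "b \<in> set [1..\<bar>last (strip_zeros P)\<bar>]"
proof -
  obtain a b where ab: "r = of_int a / of_int b" and b: "b > 0" and cop: "coprime a b"
    by (cases r) (auto simp: Fract_of_int_quotient)
  note sp = strip_zeros_nonzero_ends[OF P]
  have "horner (strip_zeros P) (of_int a / of_int b :: rat) = 0"
    using z horner_strip_zeros_eq_0_iff[OF r, of P] ab by simp
  then have "a dvd hd (strip_zeros P)" "b dvd last (strip_zeros P)"
    using rational_root_dvd[OF sp(1) b cop] by auto
  then have "\<bar>a\<bar> \<le> \<bar>hd (strip_zeros P)\<bar>" "\<bar>b\<bar> \<le> \<bar>last (strip_zeros P)\<bar>"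
    using dvd_imp_le_int sp(2,3) by blast+
  then show ?thesis using that[OF ab] ab r b by (auto simp: abs_le_iff)
qed

lemma check_pattern_sound:
  fixes r :: rat
  assumes ch: "check_pattern bs" and z: "horner (fst (pattern_polys bs (length bs))) r = 0"
  shows "horner (snd (pattern_polys bs (length bs))) r \<in> {1, -1}"
proof -
  define P where "P = fst (pattern_polys bs (length bs))"
  define Q where "Q = snd (pattern_polys bs (length bs))"
  have zP: "horner P r = 0" using z P_def by simp
  show ?thesis
  proof (cases "list_all (\<lambda>c. c = 0) P")
    case True
    then have "drop_trailing_zeros Q = [1] \<or> drop_trailing_zeros Q = [-1]"
      using ch unfolding check_pattern_def Let_def P_def Q_def by simp
    then show ?thesis using horner_drop_trailing_zeros[of Q r] unfolding Q_def by auto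
  next
    case False
    have g0: "unimodular_or_nonroot P Q 0"
      and la: "list_all (\<lambda>a. list_all (\<lambda>b. a = 0 \<or> unimodular_or_nonroot P Q (of_int a / of_int b))
                 [1..\<bar>last (strip_zeros P)\<bar>]) [-\<bar>hd (strip_zeros P)\<bar>..\<bar>hd (strip_zeros P)\<bar>]"
      using ch False unfolding check_pattern_def Let_def P_def Q_def by auto
    have "unimodular_or_nonroot P Q r"
    proof (cases "r = 0")
      case False
      then show ?thesis using rational_root_candidates[OF \<open>\<not> list_all _ P\<close> zP False] la
        unfolding list_all_iff by metis
    qed (use g0 in simp)
    then show ?thesis using zP unfolding unimodular_or_nonroot_def Q_def by simp
  qed
qed

lemma propagate_pattern:
  assumes w: "\<And>k. k < length bs \<Longrightarrow> w (int k) = (if bs ! k then lam else 0)"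
  shows "k \<le> length bs \<Longrightarrow> propagate w (0, 1) k =
    (horner (fst (pattern_polys bs k)) (complex_of_real lam), horner (snd (pattern_polys bs k)) (complex_of_real lam))"
proof (induction k)
  case (Suc k)
  then show ?case
    by (cases "bs ! k")
       (simp_all add: w pattern_step_def horner_coeffs_add horner_uminus algebra_simps)
qed simp

lemma two_valued_vanishing_multiplier:
  fixes lam :: real and w :: "int \<Rightarrow> real"
  assumes K: "1 \<le> K" "K \<le> 8" and lq: "lam \<in> \<rat>" and wv: "\<And>n. w n \<in> {0, lam}"
    and z: "fst (propagate w (0, 1) K) = 0"
  shows "snd (propagate w (0, 1) K) \<in> {1, -1}"
proof -
  obtain r where r: "lam = of_rat r" using lq by (cases rule: Rats_cases) auto
  have cl: "complex_of_real lam = of_rat r" unfolding r by (cases r) (simp add: of_rat_rat)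
  define bs where "bs = map (\<lambda>k. w (int k) = lam) [0..<K]"
  have len: "length bs = K" unfolding bs_def by simp
  have "w (int k) = (if bs ! k then lam else 0)" if "k < length bs" for k
    using that wv[of "int k"] unfolding bs_def by auto
  then have f: "propagate w (0, 1) K = (of_rat (horner (fst (pattern_polys bs K)) r),
                                        of_rat (horner (snd (pattern_polys bs K)) r))"
    using propagate_pattern[of bs w lam K] len unfolding cl horner_of_rat by simp
  have "check_pattern bs"
    using check_patterns_up_to_8 len K unfolding list_all_iff
    by (auto simp: set_n_lists)
  moreover have "horner (fst (pattern_polys bs (length bs))) r = 0" using z len unfolding f by simp
  ultimately show ?thesis using check_pattern_sound[of bs r] len unfolding f by auto
qed

definition admissible_potential :: "(int \<Rightarrow> real) \<Rightarrow> nat \<Rightarrow> bool" where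
  "admissible_potential v K \<longleftrightarrow>
     K = 2 \<or> (K \<le> 8 \<and> (\<exists>lam\<in>\<rat>. \<forall>n. v n \<in> {0, lam})) \<or> (\<forall>n. v n \<in> \<int>)"

lemma vanishing_solution_multiplier_pm1:
  assumes K: "K \<ge> 1" and adm: "admissible_potential v K"
    and u: "is_solution v u" and bl: "\<And>n. u (n + int K) = \<mu> * u n"
    and z: "u m = 0" and nz: "u (m - 1) \<noteq> 0"
  shows "\<mu> = 1 \<or> \<mu> = -1"
proof -
  note mult = vanishing_solution_multiplier[OF u bl z nz]
  consider "K = 2" | "K \<le> 8" "\<exists>lam\<in>\<rat>. \<forall>n. v n \<in> {0, lam}" | "\<forall>n. v n \<in> \<int>"
    using adm unfolding admissible_potential_def by blast
  then show ?thesis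
  proof cases
    case 1
    have "snd (propagate (\<lambda>n. v (n + m)) (0, 1) 2) = -1" by (simp add: numeral_2_eq_2)
    then show ?thesis using mult(2) 1 by simp
  next
    case 2
    then obtain lam where lam: "lam \<in> \<rat>" "\<And>n. v (n + m) \<in> {0, lam}" by blast
    have "snd (propagate (\<lambda>n. v (n + m)) (0, 1) K) \<in> {1, -1}"
      by (rule two_valued_vanishing_multiplier[OF K 2(1) lam(1) _ mult(1)]) (use lam(2) in simp)
    then show ?thesis using mult(2) by auto
  next
    case 3
    obtain a where a: "fst (propagate (\<lambda>n. v (n + m)) (1, 0) K) = of_int a"
      using propagate_Ints[of "\<lambda>n. v (n + m)" "(1, 0)" K] 3 Ints_cases by auto
    obtain b where b: "\<mu> = of_int b"
      using propagate_Ints[of "\<lambda>n. v (n + m)" "(0, 1)" K] 3 mult(2) Ints_cases by auto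
    have "of_int (a * b) = (1::complex)" using mult(3) a b by simp
    then have "a * b = 1" by (metis of_int_eq_1_iff)
    then show ?thesis using zmult_eq_1_iff[of a b] b by auto
  qed
qed

lemma bloch_ne_0:
  assumes K: "K \<ge> 1" and per: "\<forall>n. v (n + int K) = v n" and adm: "admissible_potential v K"
    and mu: "\<mu> \<noteq> 0" "\<mu> \<noteq> 1" "\<mu> \<noteq> -1"
    and eig: "propagate v w K = (\<mu> * fst w, \<mu> * snd w)" and w: "w \<noteq> (0, 0)"
  shows "bloch v K \<mu> w m \<noteq> 0"
proof
  assume z: "bloch v K \<mu> w m = 0"
  have s: "is_solution v (bloch v K \<mu> w)" by (rule bloch_is_solution[OF K per mu(1) eig])
  have bl: "bloch v K \<mu> w (n + int K) = \<mu> * bloch v K \<mu> w n" for n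
    using bloch_shift[OF K mu(1), of v w n 1] by simp
  show False
  proof (cases "bloch v K \<mu> w (m - 1) = 0")
    case True
    then have "bloch v K \<mu> w 0 = 0" "bloch v K \<mu> w (-1) = 0"
      using solution_zero_if_consecutive_zeros[OF s z] by auto
    then show False using bloch_init[OF K mu(1) eig] w by (cases w) auto
  next
    case False
    then show False using vanishing_solution_multiplier_pm1[OF K adm s bl z] mu by simp
  qed
qed

section \<open>Kernel operators and Green kernels\<close>

definition kernel_op :: "(int \<Rightarrow> int \<Rightarrow> complex) \<Rightarrow> (int \<Rightarrow> complex) \<Rightarrow> int \<Rightarrow> complex" where
  "kernel_op G x = (\<lambda>i. infsum (\<lambda>j. G i j * x j) UNIV)"

lemma kernel_row_summable:
  fixes g :: "int \<Rightarrow> real" and G :: "int \<Rightarrow> int \<Rightarrow> complex"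
  assumes g0: "\<And>k. g k \<ge> 0" and gs: "g summable_on UNIV"
    and b: "\<And>i j. norm (G i j) \<le> g (i - j)" and x: "\<And>j. norm (x j) \<le> B"
  shows "(\<lambda>j. G i j * x j) summable_on UNIV"
proof -
  have "(\<lambda>j. g (i - j) * B) summable_on UNIV"
    using summable_on_cmult_left[of "\<lambda>j. g (i - j)" UNIV B] summable_on_reflect_int_iff[of g i] gs by simp
  then have "(\<lambda>j. norm (G i j * x j)) summable_on UNIV"
    by (rule summable_on_comparison_test) (use g0 b x in \<open>auto simp: norm_mult intro: mult_mono\<close>)
  then show ?thesis using summable_on_iff_abs_summable_on_complex by blast
qed

lemma norm_kernel_op_le:
  fixes g :: "int \<Rightarrow> real"
  assumes p: "1 \<le> p" and z: "z \<in> lp p" and g0: "\<And>k. g k \<ge> 0" and gs: "g summable_on UNIV"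
    and b: "\<And>j. norm (G i j * x j) \<le> g (i - j) * norm (z j)"
  shows "norm (kernel_op G x i) \<le> infsum (\<lambda>j. g (i - j) * norm (z j)) UNIV"
proof -
  have zb: "norm (z j) \<le> lp_norm p z" for j by (rule norm_le_lp_norm[OF p z])
  have s: "(\<lambda>j. g (i - j) * norm (z j)) summable_on UNIV"
    by (rule convolution_summable_on[OF g0 gs]) (use zb in auto)
  have sn: "(\<lambda>j. norm (G i j * x j)) summable_on UNIV"
    by (rule summable_on_comparison_test[OF s]) (use b in auto)
  have "norm (kernel_op G x i) \<le> infsum (\<lambda>j. norm (G i j * x j)) UNIV"
    unfolding kernel_op_def by (rule norm_infsum_bound) (use sn in simp)
  also have "\<dots> \<le> infsum (\<lambda>j. g (i - j) * norm (z j)) UNIV"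
    by (rule infsum_mono[OF sn s]) (rule b)
  finally show ?thesis .
qed

lemma kernel_op_dominated:
  fixes g :: "int \<Rightarrow> real"
  assumes p: "1 \<le> p" and z: "z \<in> lp p" and g0: "\<And>k. g k \<ge> 0" and gs: "g summable_on UNIV"
    and b: "\<And>i j. norm (G i j * x j) \<le> g (i - j) * norm (z j)"
  shows "kernel_op G x \<in> lp p \<and> lp_norm p (kernel_op G x) \<le> infsum g UNIV * lp_norm p z"
  by (rule lp_convolution_dominated[OF p z g0 gs]) (rule norm_kernel_op_le[OF p z g0 gs b])

lemma bounded_lp_op_kernel_op:
  fixes g :: "int \<Rightarrow> real"
  assumes p: "1 \<le> p" and g0: "\<And>k. g k \<ge> 0" and gs: "g summable_on UNIV"
    and b: "\<And>i j. norm (G i j) \<le> g (i - j)"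
  shows "bounded_lp_op p (kernel_op G)"
proof -
  have bx: "norm (G i j * x j) \<le> g (i - j) * norm (x j)" for x i j
    using b[of i j] by (simp add: norm_mult mult_right_mono)
  have add: "kernel_op G (\<lambda>n. x n + y n) = (\<lambda>n. kernel_op G x n + kernel_op G y n)"
    if x: "x \<in> lp p" and y: "y \<in> lp p" for x y
  proof
    fix i
    have "(\<lambda>j. G i j * x j) summable_on UNIV" "(\<lambda>j. G i j * y j) summable_on UNIV"
      using kernel_row_summable[OF g0 gs b] norm_le_lp_norm[OF p] x y by blast+
    then show "kernel_op G (\<lambda>n. x n + y n) i = kernel_op G x i + kernel_op G y i"
      unfolding kernel_op_def using infsum_add by (simp add: distrib_left)
  qed
  have scale: "kernel_op G (\<lambda>n. c * x n) = (\<lambda>n. c * kernel_op G x n)" for c x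
    unfolding kernel_op_def
    by (simp add: mult.left_commute[of _ c] infsum_cmult_right')
  have "kernel_op G x \<in> lp p \<and> lp_norm p (kernel_op G x) \<le> infsum g UNIV * lp_norm p x"
    if "x \<in> lp p" for x
    by (rule kernel_op_dominated[OF p that g0 gs bx[where x=x]])
  then show ?thesis unfolding bounded_lp_op_def using add scale by blast
qed

lemma schroedinger_kernel_op:
  fixes g :: "int \<Rightarrow> real"
  assumes p: "1 \<le> p" and x: "x \<in> lp p" and g0: "\<And>k. g k \<ge> 0" and gs: "g summable_on UNIV"
    and b: "\<And>i j. norm (G i j) \<le> g (i - j)"
    and inv: "\<And>i j. G (i + 1) j + G (i - 1) j + complex_of_real (v i) * G i j = (if i = j then 1 else 0)"
  shows "schroedinger v (kernel_op G x) = x"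
proof
  fix i
  have s: "(\<lambda>j. G k j * x j) summable_on UNIV" for k
    using kernel_row_summable[OF g0 gs b norm_le_lp_norm[OF p x]] .
  have "schroedinger v (kernel_op G x) i
      = infsum (\<lambda>j. G (i + 1) j * x j + G (i - 1) j * x j) UNIV
        + infsum (\<lambda>j. complex_of_real (v i) * G i j * x j) UNIV"
    unfolding schroedinger_def kernel_op_def
    by (simp add: infsum_add[OF s s] infsum_cmult_right' mult.assoc)
  also have "\<dots> = infsum (\<lambda>j. (G (i + 1) j + G (i - 1) j + complex_of_real (v i) * G i j) * x j) UNIV"
    using summable_on_add[OF s s] summable_on_cmult_right[OF s[of i], of "complex_of_real (v i)"]
    by (subst infsum_add[symmetric]) (auto simp: algebra_simps)
  also have "\<dots> = x i" unfolding inv by (rule infsum_kronecker)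
  finally show "schroedinger v (kernel_op G x) i = x i" .
qed

lemma kernel_op_schroedinger:
  fixes g :: "int \<Rightarrow> real"
  assumes p: "1 \<le> p" and x: "x \<in> lp p" and g0: "\<And>k. g k \<ge> 0" and gs: "g summable_on UNIV"
    and b: "\<And>i j. norm (G i j) \<le> g (i - j)" and vb: "\<And>n. \<bar>v n\<bar> \<le> V"
    and inv: "\<And>i j. G i (j + 1) + G i (j - 1) + complex_of_real (v j) * G i j = (if i = j then 1 else 0)"
  shows "kernel_op G (schroedinger v x) = x"
proof
  fix i
  have xb: "norm (x j) \<le> lp_norm p x" for j by (rule norm_le_lp_norm[OF p x])
  have vxb: "norm (complex_of_real (v j) * x j) \<le> V * lp_norm p x" for j
    using vb[of j] xb[of j] by (simp add: norm_mult mult_mono)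
  have s1: "(\<lambda>j. G i j * x (j + 1)) summable_on UNIV"
    and s2: "(\<lambda>j. G i j * x (j - 1)) summable_on UNIV"
    and s3: "(\<lambda>j. G i j * (complex_of_real (v j) * x j)) summable_on UNIV"
    by (rule kernel_row_summable[OF g0 gs b], rule xb vxb)+
  have t1: "(\<lambda>j. G i (j - 1) * x j) summable_on UNIV"
    and r1: "infsum (\<lambda>j. G i j * x (j + 1)) UNIV = infsum (\<lambda>j. G i (j - 1) * x j) UNIV"
    using summable_on_reindex_bij_betw[OF bij_betw_shift_int[of 1], of "\<lambda>j. G i (j - 1) * x j"]
      infsum_reindex_bij_betw[OF bij_betw_shift_int[of 1], of "\<lambda>j. G i (j - 1) * x j"] s1 by simp_all
  have t2: "(\<lambda>j. G i (j + 1) * x j) summable_on UNIV"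
    and r2: "infsum (\<lambda>j. G i j * x (j - 1)) UNIV = infsum (\<lambda>j. G i (j + 1) * x j) UNIV"
    using summable_on_reindex_bij_betw[OF bij_betw_shift_int[of "-1"], of "\<lambda>j. G i (j + 1) * x j"]
      infsum_reindex_bij_betw[OF bij_betw_shift_int[of "-1"], of "\<lambda>j. G i (j + 1) * x j"] s2 by simp_all
  have "kernel_op G (schroedinger v x) i
     = infsum (\<lambda>j. G i j * x (j + 1)) UNIV + infsum (\<lambda>j. G i j * x (j - 1)) UNIV
       + infsum (\<lambda>j. G i j * (complex_of_real (v j) * x j)) UNIV"
    unfolding kernel_op_def schroedinger_def
    by (simp add: distrib_left infsum_add summable_on_add s1 s2 s3)
  also have "\<dots> = infsum (\<lambda>j. (G i (j + 1) + G i (j - 1) + complex_of_real (v j) * G i j) * x j) UNIV"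
    unfolding r1 r2 using t1 t2 s3
    by (simp add: infsum_add[symmetric] summable_on_add algebra_simps)
  also have "\<dots> = x i" unfolding inv by (rule infsum_kronecker)
  finally show "kernel_op G (schroedinger v x) i = x i" .
qed

definition green :: "(int \<Rightarrow> complex) \<Rightarrow> (int \<Rightarrow> complex) \<Rightarrow> int \<Rightarrow> int \<Rightarrow> complex" where
  "green \<phi> \<psi> i j = \<phi> (min i j) * \<psi> (max i j) / wronskian \<phi> \<psi> 0"

lemma green_sym: "green \<phi> \<psi> i j = green \<phi> \<psi> j i"
  unfolding green_def by (simp add: min.commute max.commute)

lemma green_left_inverse:
  assumes f: "is_solution v \<phi>" and g: "is_solution v \<psi>" and W: "wronskian \<phi> \<psi> 0 \<noteq> 0"
  shows "green \<phi> \<psi> (i + 1) j + green \<phi> \<psi> (i - 1) j + complex_of_real (v i) * green \<phi> \<psi> i j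
         = (if i = j then 1 else 0)"
proof -
  define W where "W = wronskian \<phi> \<psi> 0"
  have fi: "\<phi> (i + 1) + \<phi> (i - 1) + complex_of_real (v i) * \<phi> i = 0"
    using f unfolding is_solution_def by blast
  have gi: "\<psi> (i + 1) + \<psi> (i - 1) + complex_of_real (v i) * \<psi> i = 0"
    using g unfolding is_solution_def by blast
  consider "i < j" | "i = j" | "i > j" by linarith
  then show ?thesis
  proof cases
    case 1
    then have "min (i + 1) j = i + 1" "max (i + 1) j = j" "min (i - 1) j = i - 1" "max (i - 1) j = j"
      "min i j = i" "max i j = j" by auto
    then have "green \<phi> \<psi> (i + 1) j + green \<phi> \<psi> (i - 1) j + complex_of_real (v i) * green \<phi> \<psi> i j
       = (\<phi> (i + 1) + \<phi> (i - 1) + complex_of_real (v i) * \<phi> i) * \<psi> j / W"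
      unfolding green_def W_def using W by (simp add: field_simps)
    then show ?thesis using fi 1 by simp
  next
    case 3
    then have "min (i + 1) j = j" "max (i + 1) j = i + 1" "min (i - 1) j = j" "max (i - 1) j = i - 1"
      "min i j = j" "max i j = i" by auto
    then have "green \<phi> \<psi> (i + 1) j + green \<phi> \<psi> (i - 1) j + complex_of_real (v i) * green \<phi> \<psi> i j
       = \<phi> j * (\<psi> (i + 1) + \<psi> (i - 1) + complex_of_real (v i) * \<psi> i) / W"
      unfolding green_def W_def using W by (simp add: field_simps)
    then show ?thesis using gi 3 by simp
  next
    case 2
    have e: "\<phi> (i - 1) = - \<phi> (i + 1) - complex_of_real (v i) * \<phi> i" using fi
      by (simp add: eq_neg_iff_add_eq_0 algebra_simps)
    have "green \<phi> \<psi> (i + 1) j + green \<phi> \<psi> (i - 1) j + complex_of_real (v i) * green \<phi> \<psi> i j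
       = (\<phi> i * \<psi> (i + 1) + \<phi> (i - 1) * \<psi> i + complex_of_real (v i) * \<phi> i * \<psi> i) / W"
      unfolding green_def W_def 2 using W by (simp add: field_simps)
    also have "\<dots> = wronskian \<phi> \<psi> i / W" unfolding e wronskian_def by (simp add: algebra_simps)
    also have "wronskian \<phi> \<psi> i = W" unfolding W_def by (rule wronskian_const[OF f g])
    finally show ?thesis using 2 W W_def by simp
  qed
qed

lemma green_right_inverse:
  assumes "is_solution v \<phi>" "is_solution v \<psi>" "wronskian \<phi> \<psi> 0 \<noteq> 0"
  shows "green \<phi> \<psi> i (j + 1) + green \<phi> \<psi> i (j - 1) + complex_of_real (v j) * green \<phi> \<psi> i j
         = (if i = j then 1 else 0)"
  using green_left_inverse[OF assms, of j i] by (simp add: green_sym[of _ _ i])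

section \<open>Exponential dichotomy in the hyperbolic case\<close>

lemma bloch_norm_bounds:
  assumes K: "K \<ge> 1" and \<rho>: "0 < \<rho>" and mu: "norm \<mu> = \<rho> powr real K"
    and nz: "\<And>r. r < K \<Longrightarrow> fst (propagate v w r) \<noteq> 0"
  obtains c C where "0 < c"
    "\<And>n. c * \<rho> powr real_of_int n \<le> norm (bloch v K \<mu> w n)"
    "\<And>n. norm (bloch v K \<mu> w n) \<le> C * \<rho> powr real_of_int n"
proof -
  define h where "h r = norm (fst (propagate v w r)) / \<rho> powr real r" for r
  define c where "c = Min (h ` {..<K})"
  define C where "C = Max (h ` {..<K})"
  have "0 \<in> {..<K}" using K by simp
  then have "{..<K} \<noteq> {}" by blast
  then have c0: "0 < c" unfolding c_def using nz \<rho> by (subst Min_gr_iff) (auto simp: h_def)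
  have eq: "norm (bloch v K \<mu> w n) = \<rho> powr real_of_int n * h (nat (n mod int K))" for n
  proof -
    define q where "q = n div int K"
    define r where "r = nat (n mod int K)"
    have "n = int K * q + int r" unfolding q_def r_def using K by simp
    then have n: "real_of_int n = real K * real_of_int q + real r"
      using arg_cong[of n _ real_of_int] by simp
    have "norm \<mu> powi q = \<rho> powr (real K * real_of_int q)"
      unfolding mu using \<rho> by (simp add: powr_powr powr_real_of_int'[symmetric])
    then show ?thesis
      unfolding bloch_norm h_def q_def[symmetric] r_def[symmetric] n using \<rho>
      by (simp add: powr_add)
  qed
  have "c \<le> h (nat (n mod int K)) \<and> h (nat (n mod int K)) \<le> C" for n
    unfolding c_def C_def using K by (auto simp: nat_less_iff)
  then have "c * \<rho> powr real_of_int n \<le> norm (bloch v K \<mu> w n)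
      \<and> norm (bloch v K \<mu> w n) \<le> C * \<rho> powr real_of_int n" for n
    unfolding eq by (metis mult.commute mult_right_mono powr_ge_zero)
  then show ?thesis using that[OF c0] by blast
qed

text \<open>This is where the admissibility of the potential enters, through \<open>bloch_ne_0\<close>.\<close>
lemma bloch_exponential_bounds:
  assumes K: "K \<ge> 1" and per: "\<forall>n. v (n + int K) = v n" and adm: "admissible_potential v K"
    and \<rho>: "0 < \<rho>" and mu: "norm \<mu> = \<rho> powr real K" "\<mu> \<noteq> 1" "\<mu> \<noteq> -1"
    and eig: "propagate v w K = (\<mu> * fst w, \<mu> * snd w)" and w: "w \<noteq> (0, 0)"
  obtains c C where "0 < c"
    "\<And>n. c * \<rho> powr real_of_int n \<le> norm (bloch v K \<mu> w n)"
    "\<And>n. norm (bloch v K \<mu> w n) \<le> C * \<rho> powr real_of_int n"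
proof (rule bloch_norm_bounds[OF K \<rho> mu(1)])
  have mu0: "\<mu> \<noteq> 0" using mu(1) \<rho> by auto
  fix r assume "r < K"
  then have "bloch v K \<mu> w (int r) = fst (propagate v w r)" unfolding bloch_def by simp
  then show "fst (propagate v w r) \<noteq> 0" using bloch_ne_0[OF K per adm mu0 mu(2,3) eig w] by metis
qed (use that in blast)

locale dichotomy =
  fixes v :: "int \<Rightarrow> real" and \<phi>u \<phi>s :: "int \<Rightarrow> complex" and \<rho> c C :: real
  assumes sol_u: "is_solution v \<phi>u" and sol_s: "is_solution v \<phi>s"
    and wronskian_ne_0: "wronskian \<phi>u \<phi>s 0 \<noteq> 0"
    and \<rho>_pos: "0 < \<rho>" and \<rho>_less_1: "\<rho> < 1" and c_pos: "0 < c"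
    and \<phi>s_bounds: "\<And>n. c * \<rho> powr real_of_int n \<le> norm (\<phi>s n) \<and> norm (\<phi>s n) \<le> C * \<rho> powr real_of_int n"
    and \<phi>u_bounds: "\<And>n. c * \<rho> powr (- real_of_int n) \<le> norm (\<phi>u n) \<and> norm (\<phi>u n) \<le> C * \<rho> powr (- real_of_int n)"

lemma dichotomyI:
  assumes "is_solution v \<phi>u" "is_solution v \<phi>s" "wronskian \<phi>u \<phi>s 0 \<noteq> 0"
    and \<rho>: "0 < \<rho>" "\<rho> < 1" and c: "0 < cs" "0 < cu"
    and s: "\<And>n. cs * \<rho> powr real_of_int n \<le> norm (\<phi>s n)" "\<And>n. norm (\<phi>s n) \<le> Cs * \<rho> powr real_of_int n"
    and u: "\<And>n. cu * (1 / \<rho>) powr real_of_int n \<le> norm (\<phi>u n)" "\<And>n. norm (\<phi>u n) \<le> Cu * (1 / \<rho>) powr real_of_int n"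
  shows "dichotomy v \<phi>u \<phi>s \<rho> (min cs cu) (max Cs Cu)"
proof
  fix n
  have inv: "(1 / \<rho>) powr real_of_int n = \<rho> powr (- real_of_int n)"
    using \<rho> by (simp add: powr_divide powr_minus_divide)
  have "min cs cu * \<rho> powr real_of_int n \<le> cs * \<rho> powr real_of_int n"
    "Cs * \<rho> powr real_of_int n \<le> max Cs Cu * \<rho> powr real_of_int n"
    "min cs cu * \<rho> powr (- real_of_int n) \<le> cu * \<rho> powr (- real_of_int n)"
    "Cu * \<rho> powr (- real_of_int n) \<le> max Cs Cu * \<rho> powr (- real_of_int n)"
    by (intro mult_right_mono; simp)+
  then show "min cs cu * \<rho> powr real_of_int n \<le> norm (\<phi>s n) \<and> norm (\<phi>s n) \<le> max Cs Cu * \<rho> powr real_of_int n"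
    "min cs cu * \<rho> powr (- real_of_int n) \<le> norm (\<phi>u n) \<and> norm (\<phi>u n) \<le> max Cs Cu * \<rho> powr (- real_of_int n)"
    using s[of n] u[of n] unfolding inv by auto
qed (use assms in auto)

lemma hyperbolic_multipliers:
  assumes t: "\<bar>trace (monodromy v K)\<bar> > 2"
  obtains s ws wu where "0 < \<bar>s\<bar>" "\<bar>s\<bar> < 1"
    "ws \<noteq> (0, 0)" "propagate v ws K = (complex_of_real s * fst ws, complex_of_real s * snd ws)"
    "wu \<noteq> (0, 0)" "propagate v wu K = (complex_of_real (1 / s) * fst wu, complex_of_real (1 / s) * snd wu)"
proof -
  define tr where "tr = trace (monodromy v K)"
  obtain s where s: "s\<^sup>2 - tr * s + 1 = 0" "0 < \<bar>s\<bar>" "\<bar>s\<bar> < 1"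
    using hyperbolic_root[of tr] t tr_def by blast
  have "(1 / s)\<^sup>2 - tr * (1 / s) + 1 = (s\<^sup>2 - tr * s + 1) / s\<^sup>2"
    using s by (simp add: field_simps power2_eq_square)
  then have s': "(1 / s)\<^sup>2 - tr * (1 / s) + 1 = 0" using s(1) by simp
  have char: "\<mu>\<^sup>2 - (fst (propagate v (1, 0) K) + snd (propagate v (0, 1) K)) * \<mu> + 1 = 0"
    if "\<mu> = complex_of_real t" "t\<^sup>2 - tr * t + 1 = 0" for \<mu> t
    unfolding trace_monodromy[symmetric] tr_def[symmetric] that(1)
    using arg_cong[OF that(2), of complex_of_real] by simp
  obtain ws where "ws \<noteq> (0, 0)" "propagate v ws K = (complex_of_real s * fst ws, complex_of_real s * snd ws)"
    using propagate_eigenvector[OF char[OF refl s(1)]] by blast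
  moreover obtain wu where "wu \<noteq> (0, 0)"
    "propagate v wu K = (complex_of_real (1 / s) * fst wu, complex_of_real (1 / s) * snd wu)"
    using propagate_eigenvector[OF char[OF refl s']] by blast
  ultimately show ?thesis using that s(2,3) by blast
qed

lemma dichotomy_if_hyperbolic:
  assumes K: "K \<ge> 1" and per: "\<forall>n. v (n + int K) = v n" and adm: "admissible_potential v K"
    and t: "\<bar>trace (monodromy v K)\<bar> > 2"
  obtains \<phi>u \<phi>s \<rho> c C where "dichotomy v \<phi>u \<phi>s \<rho> c C"
proof -
  obtain s ws wu where s: "0 < \<bar>s\<bar>" "\<bar>s\<bar> < 1"
    and ws: "ws \<noteq> (0, 0)" "propagate v ws K = (complex_of_real s * fst ws, complex_of_real s * snd ws)"
    and wu: "wu \<noteq> (0, 0)" "propagate v wu K = (complex_of_real (1 / s) * fst wu, complex_of_real (1 / s) * snd wu)"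
    using hyperbolic_multipliers[OF t] by blast
  define \<mu>s where "\<mu>s = complex_of_real s"
  define \<mu>u where "\<mu>u = complex_of_real (1 / s)"
  have gt: "\<bar>1 / s\<bar> > 1" using s by (simp add: abs_divide)
  have ne: "s \<noteq> 0" "s \<noteq> 1" "s \<noteq> -1" using s by auto
  have ne': "1 / s \<noteq> 1" "1 / s \<noteq> -1" using gt by auto
  have "1 / s \<noteq> s" using gt s(2) by (metis less_asym)
  then have mus: "\<mu>s \<noteq> 0" "\<mu>s \<noteq> 1" "\<mu>s \<noteq> -1" and muu: "\<mu>u \<noteq> 0" "\<mu>u \<noteq> 1" "\<mu>u \<noteq> -1"
    and distinct: "\<mu>u \<noteq> \<mu>s"
    unfolding \<mu>s_def \<mu>u_def using ne ne' by (metis of_real_eq_iff of_real_1 of_real_minus of_real_0 divide_eq_0_iff)+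
  define \<rho> where "\<rho> = \<bar>s\<bar> powr (1 / real K)"
  have \<rho>0: "0 < \<rho>" unfolding \<rho>_def using s by simp
  have "\<bar>s\<bar> powr (1 / real K) < 1 powr (1 / real K)"
    by (rule powr_less_mono2) (use s K in auto)
  then have \<rho>1: "\<rho> < 1" unfolding \<rho>_def by simp
  have \<rho>K: "\<rho> powr real K = \<bar>s\<bar>" unfolding \<rho>_def using K s by (simp add: powr_powr)
  have nms: "norm \<mu>s = \<rho> powr real K" unfolding \<mu>s_def \<rho>K by simp
  have nmu: "norm \<mu>u = (1 / \<rho>) powr real K"
    unfolding \<mu>u_def using \<rho>0 \<rho>K by (simp add: powr_divide norm_divide)
  obtain cs Cs where cs: "0 < cs" "\<And>n. cs * \<rho> powr real_of_int n \<le> norm (bloch v K \<mu>s ws n)"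
      "\<And>n. norm (bloch v K \<mu>s ws n) \<le> Cs * \<rho> powr real_of_int n"
    using bloch_exponential_bounds[OF K per adm \<rho>0 nms mus(2,3) ws(2,1)[folded \<mu>s_def]] by blast
  obtain cu Cu where cu: "0 < cu" "\<And>n. cu * (1 / \<rho>) powr real_of_int n \<le> norm (bloch v K \<mu>u wu n)"
      "\<And>n. norm (bloch v K \<mu>u wu n) \<le> Cu * (1 / \<rho>) powr real_of_int n"
    using bloch_exponential_bounds[OF K per adm _ nmu muu(2,3) wu(2,1)[folded \<mu>u_def]] \<rho>0 by auto
  have "dichotomy v (bloch v K \<mu>u wu) (bloch v K \<mu>s ws) \<rho> (min cs cu) (max Cs Cu)"
  proof (rule dichotomyI[OF _ _ _ \<rho>0 \<rho>1 cs(1) cu(1) cs(2,3) cu(2,3)])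
    show "is_solution v (bloch v K \<mu>u wu)" "is_solution v (bloch v K \<mu>s ws)"
      using bloch_is_solution[OF K per] ws wu mus muu unfolding \<mu>s_def \<mu>u_def by auto
    show "wronskian (bloch v K \<mu>u wu) (bloch v K \<mu>s ws) 0 \<noteq> 0"
      by (rule wronskian_bloch_ne_0[OF K muu(1) mus(1) distinct per wu(2,1)[folded \<mu>u_def] ws(2,1)[folded \<mu>s_def]])
  qed
  then show ?thesis by (rule that)
qed

lemma norm_mult3_le:
  fixes a b d :: complex
  assumes "norm a \<le> A" "norm b \<le> B" "norm d \<le> D"
  shows "norm (a * b * d) \<le> A * B * D"
  using assms unfolding norm_mult
  by (intro mult_mono) (auto intro: order_trans[OF norm_ge_zero] mult_nonneg_nonneg)

lemma norm_mult4_le: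
  fixes a b d e :: complex
  assumes "norm a \<le> A" "norm b \<le> B" "norm d \<le> D" "norm e \<le> E"
  shows "norm (a * b * d * e) \<le> A * B * D * E"
  using norm_mult3_le[OF assms(1-3)] assms(4) unfolding norm_mult[of "a * b * d"]
  by (intro mult_mono) (auto intro: order_trans[OF norm_ge_zero])

context dichotomy
begin

definition decay :: "int \<Rightarrow> real" where "decay e = \<rho> powr real_of_int e"

lemma decay_pos [simp]: "0 < decay e"
  using \<rho>_pos by (simp add: decay_def)

lemma decay_nonneg [simp]: "0 \<le> decay e"
  using \<rho>_pos by (simp add: decay_def)

lemma decay_add: "decay a * decay b = decay (a + b)"
  by (simp add: powr_add[symmetric] decay_def)

lemma decay_diff: "decay a / decay b = decay (a - b)"
  by (simp add: powr_diff decay_def)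

lemma decay_antimono: "a \<le> b \<Longrightarrow> decay b \<le> decay a"
  unfolding decay_def using \<rho>_pos \<rho>_less_1 by (intro powr_mono') auto

lemma decay_of_nat: "decay (int n) = \<rho> ^ n"
  unfolding decay_def using \<rho>_pos by (simp add: powr_realpow)

lemma \<phi>s_upper: "norm (\<phi>s n) \<le> C * decay n" using \<phi>s_bounds[of n] by (simp add: decay_def)
lemma \<phi>s_lower: "c * decay n \<le> norm (\<phi>s n)" using \<phi>s_bounds[of n] by (simp add: decay_def)
lemma \<phi>u_upper: "norm (\<phi>u n) \<le> C * decay (- n)" using \<phi>u_bounds[of n] by (simp add: decay_def)
lemma \<phi>u_lower: "c * decay (- n) \<le> norm (\<phi>u n)" using \<phi>u_bounds[of n] by (simp add: decay_def)

lemma C_pos: "0 < C"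
proof -
  have "c * decay 0 \<le> C * decay 0" using \<phi>s_lower[of 0] \<phi>s_upper[of 0] by linarith
  then show ?thesis using c_pos decay_pos[of 0] by (simp add: mult_le_cancel_right_pos)
qed

lemma \<phi>s_ne_0: "\<phi>s n \<noteq> 0"
  using \<phi>s_lower[of n] c_pos decay_pos[of n] by (smt (verit) mult_pos_pos norm_zero)

lemma \<phi>u_ne_0: "\<phi>u n \<noteq> 0"
  using \<phi>u_lower[of n] c_pos decay_pos[of "- n"] by (smt (verit) mult_pos_pos norm_zero)

abbreviation W :: complex where "W \<equiv> wronskian \<phi>u \<phi>s 0"

definition G :: "int \<Rightarrow> int \<Rightarrow> complex" where "G = green \<phi>u \<phi>s"

definition C1 :: real where "C1 = C * C / norm W"

lemma C1_nonneg: "0 \<le> C1"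
  unfolding C1_def by simp

lemma G_bound: "norm (G i j) \<le> C1 * decay \<bar>i - j\<bar>"
proof -
  have "norm (G i j) = norm (\<phi>u (min i j)) * norm (\<phi>s (max i j)) / norm W"
    unfolding G_def green_def by (simp add: norm_mult norm_divide)
  also have "\<dots> \<le> (C * decay (- min i j)) * (C * decay (max i j)) / norm W"
    using \<phi>u_upper \<phi>s_upper C_pos by (intro divide_right_mono mult_mono) auto
  also have "\<dots> = C1 * decay (- min i j + max i j)"
    unfolding C1_def decay_add[symmetric] by simp
  also have "- min i j + max i j = \<bar>i - j\<bar>" by auto
  finally show ?thesis .
qed

subsection \<open>Green kernels of the finite sections\<close>

text \<open>The coefficients making \<open>\<psi>L n\<close> vanish at \<open>-n-1\<close> and \<open>\<psi>R n\<close> vanish at \<open>n+1\<close>, so that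
  the Green kernel of this pair inverts the finite section \<open>A\<^sub>n\<close>.\<close>
definition aL :: "nat \<Rightarrow> complex" where "aL n = - \<phi>u (- int n - 1) / \<phi>s (- int n - 1)"
definition bR :: "nat \<Rightarrow> complex" where "bR n = - \<phi>s (int n + 1) / \<phi>u (int n + 1)"

definition \<psi>L :: "nat \<Rightarrow> int \<Rightarrow> complex" where "\<psi>L n k = \<phi>u k + aL n * \<phi>s k"
definition \<psi>R :: "nat \<Rightarrow> int \<Rightarrow> complex" where "\<psi>R n k = \<phi>s k + bR n * \<phi>u k"

definition Gsec :: "nat \<Rightarrow> int \<Rightarrow> int \<Rightarrow> complex" where "Gsec n = green (\<psi>L n) (\<psi>R n)"

definition A0 :: real where "A0 = C / c"

lemma A0_nonneg: "0 \<le> A0"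
  unfolding A0_def using C_pos c_pos by simp

lemma aL_bound: "norm (aL n) \<le> A0 * decay (2 * int n + 2)"
proof -
  have "norm (aL n) = norm (\<phi>u (- int n - 1)) / norm (\<phi>s (- int n - 1))"
    unfolding aL_def by (simp add: norm_divide)
  also have "\<dots> \<le> (C * decay (int n + 1)) / (c * decay (- int n - 1))"
  proof (rule frac_le)
    show "norm (\<phi>u (- int n - 1)) \<le> C * decay (int n + 1)"
      using \<phi>u_upper[of "- int n - 1"] by (simp add: add.commute)
  qed (use \<phi>s_lower C_pos c_pos in auto)
  also have "\<dots> = A0 * (decay (int n + 1) / decay (- int n - 1))"
    unfolding A0_def by simp
  also have "decay (int n + 1) / decay (- int n - 1) = decay (2 * int n + 2)"
    by (simp add: decay_diff)
  finally show ?thesis .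
qed

lemma bR_bound: "norm (bR n) \<le> A0 * decay (2 * int n + 2)"
proof -
  have "norm (bR n) = norm (\<phi>s (int n + 1)) / norm (\<phi>u (int n + 1))"
    unfolding bR_def by (simp add: norm_divide)
  also have "\<dots> \<le> (C * decay (int n + 1)) / (c * decay (- int n - 1))"
  proof (rule frac_le)
    show "c * decay (- int n - 1) \<le> norm (\<phi>u (int n + 1))" using \<phi>u_lower[of "int n + 1"] by simp
  qed (use \<phi>s_upper C_pos c_pos in auto)
  also have "\<dots> = A0 * (decay (int n + 1) / decay (- int n - 1))"
    unfolding A0_def by simp
  also have "decay (int n + 1) / decay (- int n - 1) = decay (2 * int n + 2)"
    by (simp add: decay_diff)
  finally show ?thesis .
qed

lemma \<psi>L_is_solution: "is_solution v (\<psi>L n)"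
  using is_solution_lin_comb[OF sol_u sol_s, of 1 "aL n"] unfolding \<psi>L_def[abs_def] by simp

lemma \<psi>R_is_solution: "is_solution v (\<psi>R n)"
  using is_solution_lin_comb[OF sol_s sol_u, of 1 "bR n"] unfolding \<psi>R_def[abs_def] by simp

lemma \<psi>L_boundary: "\<psi>L n (- int n - 1) = 0"
  unfolding \<psi>L_def aL_def using \<phi>s_ne_0[of "- int n - 1"] by simp

lemma \<psi>R_boundary: "\<psi>R n (int n + 1) = 0"
  unfolding \<psi>R_def bR_def using \<phi>u_ne_0[of "int n + 1"] by simp

lemma wronskian_\<psi>: "wronskian (\<psi>L n) (\<psi>R n) 0 = (1 - aL n * bR n) * W"
proof -
  have "wronskian (\<psi>L n) (\<psi>R n) 0
      = wronskian (\<lambda>k. 1 * \<phi>u k + aL n * \<phi>s k) (\<lambda>k. bR n * \<phi>u k + 1 * \<phi>s k) 0"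
    unfolding \<psi>L_def \<psi>R_def by (simp add: add.commute)
  then show ?thesis unfolding wronskian_lin_comb by simp
qed

text \<open>From this size on the boundary coefficients are so small that \<open>|1 - aL n * bR n| \<ge> 1/2\<close>.\<close>
definition N0 :: nat where "N0 = (SOME N. \<forall>n\<ge>N. A0 * A0 * \<rho> ^ n \<le> 1 / 2)"

lemma N0: "n \<ge> N0 \<Longrightarrow> A0 * A0 * \<rho> ^ n \<le> 1 / 2"
proof -
  have "(\<lambda>n. A0 * A0 * \<rho> ^ n) \<longlonglongrightarrow> A0 * A0 * 0"
    using \<rho>_pos \<rho>_less_1 by (intro tendsto_mult tendsto_const LIMSEQ_power_zero) auto
  then have "eventually (\<lambda>n. A0 * A0 * \<rho> ^ n < 1 / 2) sequentially"
    by (intro order_tendstoD(2)) auto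
  then have "\<exists>N. \<forall>n\<ge>N. A0 * A0 * \<rho> ^ n \<le> 1 / 2"
    unfolding eventually_sequentially by (meson less_imp_le)
  then have "\<forall>n\<ge>N0. A0 * A0 * \<rho> ^ n \<le> 1 / 2" unfolding N0_def by (rule someI_ex)
  then show "n \<ge> N0 \<Longrightarrow> A0 * A0 * \<rho> ^ n \<le> 1 / 2" by blast
qed

lemma norm_one_minus_aL_bR: assumes "n \<ge> N0" shows "norm (1 - aL n * bR n) \<ge> 1 / 2"
proof -
  have "norm (aL n * bR n) \<le> (A0 * decay (2 * int n + 2)) * (A0 * decay (2 * int n + 2))"
    unfolding norm_mult using aL_bound bR_bound
    by (intro mult_mono) (auto intro: order_trans[OF norm_ge_zero])
  also have "\<dots> = A0 * A0 * decay (4 * int n + 4)" unfolding decay_def by (simp add: mult_ac flip: powr_add)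
  also have "\<dots> \<le> A0 * A0 * decay (int n)" using A0_nonneg by (intro mult_left_mono decay_antimono) auto
  also have "\<dots> \<le> 1 / 2" unfolding decay_of_nat using N0[OF assms] .
  finally have "norm (aL n * bR n) \<le> 1 / 2" .
  then show ?thesis using norm_triangle_ineq[of "1 - aL n * bR n" "aL n * bR n"] by simp
qed

lemma wronskian_\<psi>_ne_0: assumes "n \<ge> N0" shows "wronskian (\<psi>L n) (\<psi>R n) 0 \<noteq> 0"
  using norm_one_minus_aL_bR[OF assms] wronskian_ne_0 unfolding wronskian_\<psi> by auto

lemma Gsec_left_inverse: assumes "n \<ge> N0"
  shows "Gsec n (i + 1) j + Gsec n (i - 1) j + complex_of_real (v i) * Gsec n i j = (if i = j then 1 else 0)"
  unfolding Gsec_def by (rule green_left_inverse[OF \<psi>L_is_solution \<psi>R_is_solution wronskian_\<psi>_ne_0[OF assms]])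

lemma Gsec_right_inverse: assumes "n \<ge> N0"
  shows "Gsec n i (j + 1) + Gsec n i (j - 1) + complex_of_real (v j) * Gsec n i j = (if i = j then 1 else 0)"
  unfolding Gsec_def by (rule green_right_inverse[OF \<psi>L_is_solution \<psi>R_is_solution wronskian_\<psi>_ne_0[OF assms]])

lemma Gsec_right_boundary: "j \<le> int n + 1 \<Longrightarrow> Gsec n (int n + 1) j = 0"
  unfolding Gsec_def green_def using \<psi>R_boundary by (simp add: max_def)

lemma Gsec_left_boundary: "j \<ge> - int n - 1 \<Longrightarrow> Gsec n (- int n - 1) j = 0"
  unfolding Gsec_def green_def using \<psi>L_boundary by (simp add: min_def)

lemma Gsec_sym: "Gsec n i j = Gsec n j i"
  unfolding Gsec_def by (rule green_sym)

text \<open>\<open>Gsec n i j - G i j\<close> decays in the distance of \<open>i\<close> and \<open>j\<close> from each other and from the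
  boundary of the section.\<close>
definition sec_exponent :: "nat \<Rightarrow> int \<Rightarrow> int \<Rightarrow> int" where
  "sec_exponent n i j = max \<bar>i - j\<bar> (max (int n - \<bar>i\<bar>) (int n - \<bar>j\<bar>))"

definition Gdiff :: "nat \<Rightarrow> int \<Rightarrow> int \<Rightarrow> complex" where
  "Gdiff n i j = (if i \<in> sec n \<and> j \<in> sec n then Gsec n i j else 0) - G i j"

lemma sec_exponent_sym: "sec_exponent n i j = sec_exponent n j i"
  unfolding sec_exponent_def by (simp add: abs_minus_commute max.commute max.left_commute)

lemma Gsec_minus_G_eq:
  assumes n: "n \<ge> N0" and pq: "p \<le> q"
  shows "Gsec n p q - G p q
    = (bR n * \<phi>u p * \<phi>u q + aL n * \<phi>s p * \<phi>s q + aL n * bR n * \<phi>s p * \<phi>u q + aL n * bR n * \<phi>u p * \<phi>s q)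
      / ((1 - aL n * bR n) * W)"
proof -
  have "1 - aL n * bR n \<noteq> 0" using norm_one_minus_aL_bR[OF n] by auto
  then show ?thesis
    unfolding Gsec_def G_def green_def wronskian_\<psi> using pq wronskian_ne_0
    by (simp add: \<psi>L_def \<psi>R_def field_simps)
qed

lemma norm_le_decay_mono:
  assumes "norm t \<le> B * decay e" "0 \<le> B" "m \<le> e"
  shows "norm t \<le> B * decay m"
  using assms(1) mult_left_mono[OF decay_antimono[OF assms(3)] assms(2)] by linarith

lemma norm_term_le:
  assumes t: "norm t \<le> E * (C * decay a) * (C * decay b)" and E: "E = B * decay d"
    and B: "0 \<le> B" and m: "m \<le> d + a + b"
  shows "norm t \<le> B * C * C * decay m"
proof (rule norm_le_decay_mono[OF _ _ m])
  have eq: "E * (C * decay a) * (C * decay b) = B * C * C * decay (d + a + b)"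
    unfolding E decay_def by (simp add: mult_ac flip: powr_add; simp add: algebra_simps)
  show "norm t \<le> B * C * C * decay (d + a + b)" using t[unfolded eq] .
qed (use B C_pos in simp)

definition C2 :: real where "C2 = (2 / norm W) * (2 * A0 * C * C + 2 * A0 * A0 * C * C)"

lemma C2_nonneg: "0 \<le> C2"
  unfolding C2_def using A0_nonneg C_pos by simp

lemma Gsec_minus_G_bound:
  assumes n: "n \<ge> N0" and pq: "- int n \<le> p" "p \<le> q" "q \<le> int n"
  shows "norm (Gsec n p q - G p q) \<le> C2 * decay (sec_exponent n p q)"
proof -
  define a where "a = aL n"
  define b where "b = bR n"
  define E where "E = A0 * decay (2 * int n + 2)"
  define M where "M = sec_exponent n p q"
  have aE: "norm a \<le> E" and bE: "norm b \<le> E" unfolding a_def b_def E_def by (rule aL_bound bR_bound)+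
  have EE: "E * E = (A0 * A0) * decay (4 * int n + 4)"
    unfolding E_def decay_def by (simp add: mult_ac flip: powr_add)
  have M: "M \<le> (2 * int n + 2) + - p + - q" "M \<le> (2 * int n + 2) + p + q"
    "M \<le> (4 * int n + 4) + p + - q" "M \<le> (4 * int n + 4) + - p + q"
    unfolding M_def sec_exponent_def using pq by auto
  have "norm (b * \<phi>u p * \<phi>u q + a * \<phi>s p * \<phi>s q + a * b * \<phi>s p * \<phi>u q + a * b * \<phi>u p * \<phi>s q)
      \<le> norm (b * \<phi>u p * \<phi>u q) + norm (a * \<phi>s p * \<phi>s q) + norm (a * b * \<phi>s p * \<phi>u q) + norm (a * b * \<phi>u p * \<phi>s q)"
    by (intro norm_triangle_le add_mono order_refl norm_triangle_ineq)
  also have "\<dots> \<le> (2 * A0 * C * C + 2 * A0 * A0 * C * C) * decay M"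
    using norm_term_le[OF norm_mult3_le[OF bE \<phi>u_upper \<phi>u_upper] E_def A0_nonneg M(1)]
      norm_term_le[OF norm_mult3_le[OF aE \<phi>s_upper \<phi>s_upper] E_def A0_nonneg M(2)]
      norm_term_le[OF norm_mult4_le[OF aE bE \<phi>s_upper \<phi>u_upper] EE _ M(3)]
      norm_term_le[OF norm_mult4_le[OF aE bE \<phi>u_upper \<phi>s_upper] EE _ M(4)]
    by (simp add: algebra_simps)
  finally have num: "norm (b * \<phi>u p * \<phi>u q + a * \<phi>s p * \<phi>s q + a * b * \<phi>s p * \<phi>u q + a * b * \<phi>u p * \<phi>s q)
      \<le> (2 * A0 * C * C + 2 * A0 * A0 * C * C) * decay M" .
  have "norm ((1 - a * b) * W) \<ge> (1 / 2) * norm W"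
    unfolding norm_mult a_def b_def using norm_one_minus_aL_bR[OF n] by (intro mult_right_mono) auto
  with num have "norm (Gsec n p q - G p q) \<le> (2 * A0 * C * C + 2 * A0 * A0 * C * C) * decay M / ((1 / 2) * norm W)"
    unfolding Gsec_minus_G_eq[OF n pq(2)] a_def[symmetric] b_def[symmetric] norm_divide
    using wronskian_ne_0 A0_nonneg C_pos by (intro frac_le) auto
  then show ?thesis unfolding C2_def M_def by (simp add: field_simps)
qed

definition C3 :: real where "C3 = C1 + C2"

lemma Gdiff_bound: assumes n: "n \<ge> N0" shows "norm (Gdiff n i j) \<le> C3 * decay (sec_exponent n i j)"
proof (cases "i \<in> sec n \<and> j \<in> sec n")
  case True
  then have ij: "- int n \<le> i" "i \<le> int n" "- int n \<le> j" "j \<le> int n" unfolding sec_def by auto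
  have "norm (Gsec n i j - G i j) \<le> C2 * decay (sec_exponent n i j)"
  proof (cases "i \<le> j")
    case False
    then have "norm (Gsec n j i - G j i) \<le> C2 * decay (sec_exponent n j i)"
      using Gsec_minus_G_bound[OF n] ij by auto
    then show ?thesis by (simp add: Gsec_sym[of n j i] G_def green_sym[of _ _ j i] sec_exponent_sym[of n j i])
  qed (use Gsec_minus_G_bound[OF n] ij in auto)
  also have "\<dots> \<le> C3 * decay (sec_exponent n i j)" unfolding C3_def using C1_nonneg by (intro mult_right_mono) auto
  finally show ?thesis unfolding Gdiff_def using True by simp
next
  case False
  then have "sec_exponent n i j \<le> \<bar>i - j\<bar>" unfolding sec_exponent_def sec_def by auto
  have "norm (Gdiff n i j) = norm (G i j)" unfolding Gdiff_def using False by auto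
  also have "\<dots> \<le> C1 * decay \<bar>i - j\<bar>" by (rule G_bound)
  also have "\<dots> \<le> C3 * decay (sec_exponent n i j)"
    unfolding C3_def using C1_nonneg C2_nonneg \<open>sec_exponent n i j \<le> \<bar>i - j\<bar>\<close>
    by (intro mult_mono decay_antimono) auto
  finally show ?thesis .
qed

end

section \<open>Applicability of the finite section method\<close>

lemma op_entry_schroedinger:
  "op_entry (schroedinger v) i k = (if k = i + 1 then 1 else 0) + (if k = i - 1 then 1 else 0)
      + (if k = i then complex_of_real (v i) else 0)"
  unfolding op_entry_def schroedinger_def by auto

lemma sum_op_entry_schroedinger_left:
  assumes "finite S"
  shows "(\<Sum>k\<in>S. op_entry (schroedinger v) i k * g k)
       = (if i + 1 \<in> S then g (i + 1) else 0) + (if i - 1 \<in> S then g (i - 1) else 0)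
         + (if i \<in> S then complex_of_real (v i) * g i else 0)"
proof -
  have "(\<Sum>k\<in>S. op_entry (schroedinger v) i k * g k)
     = (\<Sum>k\<in>S. (if k = i + 1 then g k else 0) + (if k = i - 1 then g k else 0)
                + (if k = i then complex_of_real (v i) * g k else 0))"
    unfolding op_entry_schroedinger by (intro sum.cong) (auto simp: distrib_right)
  then show ?thesis using assms by (simp add: sum.distrib sum.delta')
qed

lemma sum_op_entry_schroedinger_right:
  assumes "finite S"
  shows "(\<Sum>k\<in>S. g k * op_entry (schroedinger v) k j)
       = (if j - 1 \<in> S then g (j - 1) else 0) + (if j + 1 \<in> S then g (j + 1) else 0)
         + (if j \<in> S then complex_of_real (v j) * g j else 0)"
proof -
  have "(\<Sum>k\<in>S. g k * op_entry (schroedinger v) k j)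
     = (\<Sum>k\<in>S. (if k = j - 1 then g k else 0) + (if k = j + 1 then g k else 0)
                + (if k = j then complex_of_real (v j) * g k else 0))"
    unfolding op_entry_schroedinger by (intro sum.cong) (auto simp: distrib_left)
  then show ?thesis using assms by (simp add: sum.distrib sum.delta')
qed

lemma finite_sec [simp]: "finite (sec n)"
  unfolding sec_def by simp

lemma section_inverse_unique:
  assumes B: "is_section_inverse A n B" and B': "is_section_inverse A n B'"
    and i: "i \<in> sec n" and j: "j \<in> sec n"
  shows "B i j = B' i j"
proof -
  have "(\<Sum>l\<in>sec n. (\<Sum>k\<in>sec n. B i k * op_entry A k l) * B' l j)
      = (\<Sum>l\<in>sec n. (if i = l then 1 else 0) * B' l j)"
    using B i by (intro sum.cong) (auto simp: is_section_inverse_def)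
  also have "\<dots> = (\<Sum>l\<in>sec n. (if i = l then B' l j else 0))" by (intro sum.cong) auto
  also have "\<dots> = B' i j" using i by (simp add: sum.delta)
  finally have e1: "(\<Sum>l\<in>sec n. (\<Sum>k\<in>sec n. B i k * op_entry A k l) * B' l j) = B' i j" .
  have "(\<Sum>k\<in>sec n. B i k * (\<Sum>l\<in>sec n. op_entry A k l * B' l j))
      = (\<Sum>k\<in>sec n. B i k * (if k = j then 1 else 0))"
    using B' j by (intro sum.cong) (auto simp: is_section_inverse_def)
  also have "\<dots> = (\<Sum>k\<in>sec n. (if k = j then B i k else 0))" by (intro sum.cong) auto
  also have "\<dots> = B i j" using j by (simp add: sum.delta')
  finally have e2: "(\<Sum>k\<in>sec n. B i k * (\<Sum>l\<in>sec n. op_entry A k l * B' l j)) = B i j" .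
  have "(\<Sum>l\<in>sec n. (\<Sum>k\<in>sec n. B i k * op_entry A k l) * B' l j)
      = (\<Sum>k\<in>sec n. B i k * (\<Sum>l\<in>sec n. op_entry A k l * B' l j))"
  proof -
    have "(\<Sum>l\<in>sec n. (\<Sum>k\<in>sec n. B i k * op_entry A k l) * B' l j)
        = (\<Sum>l\<in>sec n. \<Sum>k\<in>sec n. B i k * op_entry A k l * B' l j)"
      by (simp add: sum_distrib_right)
    also have "\<dots> = (\<Sum>k\<in>sec n. \<Sum>l\<in>sec n. B i k * op_entry A k l * B' l j)"
      by (rule sum.swap)
    also have "\<dots> = (\<Sum>k\<in>sec n. B i k * (\<Sum>l\<in>sec n. op_entry A k l * B' l j))"
      by (simp add: sum_distrib_left mult.assoc)
    finally show ?thesis .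
  qed
  then show ?thesis using e1 e2 by simp
qed

lemma bounded_lp_op_schroedinger:
  assumes p: "1 \<le> p" and V: "\<And>n. \<bar>v n\<bar> \<le> V"
  shows "bounded_lp_op p (schroedinger v)"
proof -
  have V0: "0 \<le> V" using V[of 0] by simp
  define g :: "int \<Rightarrow> real" where "g k = (if \<bar>k\<bar> \<le> 1 then V + 1 else 0)" for k
  have g0: "g k \<ge> 0" for k unfolding g_def using V0 by simp
  have gs: "g summable_on UNIV"
    by (rule summable_on_cong_neutral[where S="{-1..1}", THEN iffD1]) (auto simp: g_def)
  have bnd: "norm (schroedinger v x i) \<le> infsum (\<lambda>j. g (i - j) * norm (x j)) UNIV" for x i
  proof -
    have "infsum (\<lambda>j. g (i - j) * norm (x j)) UNIV = infsum (\<lambda>j. g (i - j) * norm (x j)) {i - 1, i, i + 1}"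
      by (rule infsum_cong_neutral) (auto simp: g_def)
    also have "\<dots> = (V + 1) * norm (x (i + 1)) + (V + 1) * norm (x (i - 1)) + (V + 1) * norm (x i)"
      by (simp add: g_def)
    finally have e: "infsum (\<lambda>j. g (i - j) * norm (x j)) UNIV
      = (V + 1) * norm (x (i + 1)) + (V + 1) * norm (x (i - 1)) + (V + 1) * norm (x i)" .
    have "norm (schroedinger v x i) \<le> norm (x (i + 1)) + norm (x (i - 1)) + \<bar>v i\<bar> * norm (x i)"
      unfolding schroedinger_def by (rule order_trans[OF norm_triangle_ineq]) (simp add: norm_mult norm_triangle_ineq)
    also have "\<dots> \<le> (V + 1) * norm (x (i + 1)) + (V + 1) * norm (x (i - 1)) + (V + 1) * norm (x i)"
      using V[of i] V0 by (intro add_mono mult_right_mono) (auto simp: algebra_simps)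
    finally show ?thesis unfolding e .
  qed
  have "schroedinger v x \<in> lp p \<and> lp_norm p (schroedinger v x) \<le> infsum g UNIV * lp_norm p x"
    if "x \<in> lp p" for x
    by (rule lp_convolution_dominated[OF p that g0 gs bnd])
  moreover have "schroedinger v (\<lambda>n. x n + y n) = (\<lambda>n. schroedinger v x n + schroedinger v y n)"
    "schroedinger v (\<lambda>n. c * x n) = (\<lambda>n. c * schroedinger v x n)" for x y c
    unfolding schroedinger_def by (auto simp: algebra_simps)
  ultimately show ?thesis unfolding bounded_lp_op_def by blast
qed

lemma lp_tail_small:
  assumes p: "p \<noteq> \<infinity>" and x: "x \<in> lp p" and \<delta>: "0 < \<delta>"
  obtains m where "infsum (\<lambda>j. norm (x j) powr real_of_ereal p) (UNIV - sec m) < \<delta>"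
proof -
  define a where "a j = norm (x j) powr real_of_ereal p" for j
  have as: "a summable_on UNIV" using x p mem_lp_finite[of p x] unfolding a_def[abs_def] by auto
  have "eventually (\<lambda>F. dist (sum a F) (infsum a UNIV) < \<delta>) (finite_subsets_at_top UNIV)"
    using infsum_tendsto[OF as] \<delta> by (rule tendstoD)
  then obtain X where X: "finite X" "\<forall>Y. finite Y \<and> X \<subseteq> Y \<and> Y \<subseteq> UNIV \<longrightarrow> dist (sum a Y) (infsum a UNIV) < \<delta>"
    unfolding eventually_finite_subsets_at_top by (elim exE conjE) (rule that)
  define m where "m = nat (Max (insert 0 (abs ` X)))"
  have "X \<subseteq> sec m"
  proof
    fix j assume j: "j \<in> X"
    have fX: "finite (insert 0 (abs ` X))" using X(1) by simp
    have "\<bar>j\<bar> \<le> Max (insert 0 (abs ` X))" by (rule Max_ge[OF fX]) (use j in simp)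
    moreover have "0 \<le> Max (insert 0 (abs ` X))" by (rule Max_ge[OF fX]) simp
    ultimately show "j \<in> sec m" unfolding sec_def m_def by auto
  qed
  then have "dist (sum a (sec m)) (infsum a UNIV) < \<delta>" using X(2) finite_sec[of m] by blast
  then have "infsum a UNIV - sum a (sec m) < \<delta>" by (simp add: dist_real_def)
  moreover have "infsum a UNIV = sum a (sec m) + infsum a (UNIV - sec m)"
    using infsum_Un_disjoint[OF _ summable_on_subset[OF as], of "sec m" "UNIV - sec m"] by (simp add: Un_absorb1)
  ultimately show ?thesis using that[of m] unfolding a_def by simp
qed

lemma infsum_multiplier_powr_le:
  assumes p: "1 \<le> p" "p \<noteq> \<infinity>" and x: "x \<in> lp p"
    and mu: "\<And>j. 0 \<le> \<mu> j" "\<And>j. \<mu> j \<le> 1" and small: "\<And>j. j \<in> sec m \<Longrightarrow> \<mu> j \<le> \<eta>"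
  shows "infsum (\<lambda>j. norm (complex_of_real (\<mu> j) * x j) powr real_of_ereal p) UNIV
    \<le> \<eta> powr real_of_ereal p * infsum (\<lambda>j. norm (x j) powr real_of_ereal p) UNIV
      + infsum (\<lambda>j. norm (x j) powr real_of_ereal p) (UNIV - sec m)"
proof -
  define P where "P = real_of_ereal p"
  have P: "P \<ge> 1" using real_of_ereal_ge_1[OF p] P_def by simp
  define a where "a j = norm (x j) powr P" for j
  define f where "f j = \<mu> j powr P * a j" for j
  have a0: "a j \<ge> 0" and f0: "f j \<ge> 0" for j unfolding a_def f_def by simp_all
  have as: "a summable_on UNIV" using x p(2) mem_lp_finite[of p x] unfolding P_def a_def[abs_def] by auto
  have fa: "f j \<le> a j" for j
    using powr_mono2[of P "\<mu> j" 1] mu P a0[of j] unfolding f_def by (simp add: mult_left_le_one_le)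
  have fs: "f summable_on UNIV" by (rule summable_on_comparison_test[OF as]) (use fa f0 in auto)
  have "infsum f UNIV = sum f (sec m) + infsum f (UNIV - sec m)"
    using infsum_Un_disjoint[OF _ summable_on_subset[OF fs], of "sec m" "UNIV - sec m"] by (simp add: Un_absorb1)
  also have "sum f (sec m) \<le> \<eta> powr P * infsum a UNIV"
  proof -
    have "sum f (sec m) \<le> sum (\<lambda>j. \<eta> powr P * a j) (sec m)"
      using small mu P a0 unfolding f_def by (intro sum_mono mult_right_mono powr_mono2) auto
    also have "\<dots> \<le> \<eta> powr P * infsum a UNIV"
      unfolding sum_distrib_left[symmetric]
      by (intro mult_left_mono finite_sum_le_infsum[OF as]) (use a0 in auto)
    finally show ?thesis .
  qed
  also have "infsum f (UNIV - sec m) \<le> infsum a (UNIV - sec m)"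
    by (rule infsum_mono[OF summable_on_subset[OF fs] summable_on_subset[OF as]]) (auto intro: fa)
  finally show ?thesis
    using mu unfolding P_def f_def a_def by (simp add: norm_mult powr_mult)
qed

lemma lp_norm_multiplier_tendsto_0:
  assumes p: "1 \<le> p" "p \<noteq> \<infinity>" and x: "x \<in> lp p"
    and mu0: "\<And>n j. 0 \<le> \<mu> n j" and mu1: "\<And>n j. \<mu> n j \<le> 1"
    and unif: "\<And>m e. e > 0 \<Longrightarrow> \<exists>N. \<forall>n\<ge>N. \<forall>j\<in>sec m. \<mu> n j \<le> e"
  shows "(\<lambda>n. lp_norm p (\<lambda>j. complex_of_real (\<mu> n j) * x j)) \<longlonglongrightarrow> 0"
proof (rule LIMSEQ_I)
  fix \<epsilon> :: real assume e0: "0 < \<epsilon>"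
  define P where "P = real_of_ereal p"
  have P: "P \<ge> 1" using real_of_ereal_ge_1[OF p] P_def by simp
  define A where "A = infsum (\<lambda>j. norm (x j) powr P) UNIV"
  have A0: "A \<ge> 0" unfolding A_def by (rule infsum_nonneg) simp
  define \<delta> where "\<delta> = \<epsilon> powr P / 2"
  have d0: "\<delta> > 0" unfolding \<delta>_def using e0 by simp
  obtain m where tail: "infsum (\<lambda>j. norm (x j) powr P) (UNIV - sec m) < \<delta>"
    using lp_tail_small[OF p(2) x d0] unfolding P_def by blast
  define \<eta> where "\<eta> = (\<delta> / (A + 1)) powr (1 / P)"
  have "\<eta> > 0" unfolding \<eta>_def using d0 A0 by simp
  then obtain N where N: "\<And>n j. n \<ge> N \<Longrightarrow> j \<in> sec m \<Longrightarrow> \<mu> n j \<le> \<eta>" using unif by blast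
  have "\<eta> powr P * A \<le> \<delta>"
    unfolding \<eta>_def using d0 A0 P by (simp add: powr_powr field_simps)
  show "\<exists>no. \<forall>n\<ge>no. norm (lp_norm p (\<lambda>j. complex_of_real (\<mu> n j) * x j) - 0) < \<epsilon>"
  proof (intro exI allI impI)
    fix n assume "n \<ge> N"
    then have "infsum (\<lambda>j. norm (complex_of_real (\<mu> n j) * x j) powr P) UNIV < \<epsilon> powr P"
      using infsum_multiplier_powr_le[OF p x mu0 mu1 N] tail \<open>\<eta> powr P * A \<le> \<delta>\<close>
      unfolding P_def[symmetric] A_def[symmetric] \<delta>_def by fastforce
    then have "(infsum (\<lambda>j. norm (complex_of_real (\<mu> n j) * x j) powr P) UNIV) powr (1 / P) < \<epsilon>"
      using P e0 powr_less_mono2[of "1 / P" _ "\<epsilon> powr P"] by (simp add: powr_powr infsum_nonneg)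
    then show "norm (lp_norm p (\<lambda>j. complex_of_real (\<mu> n j) * x j) - 0) < \<epsilon>"
      using p(2) by (simp add: lp_norm_finite P_def infsum_nonneg)
  qed
qed

context dichotomy
begin

lemma Gsec_is_section_inverse:
  assumes n: "n \<ge> N0"
  shows "is_section_inverse (schroedinger v) n (Gsec n)"
  unfolding is_section_inverse_def
proof (intro ballI conjI)
  fix i j assume i: "i \<in> sec n" and j: "j \<in> sec n"
  have ib: "- int n \<le> i" "i \<le> int n" and jb: "- int n \<le> j" "j \<le> int n"
    using i j unfolding sec_def by auto
  have "(if i + 1 \<in> sec n then Gsec n (i + 1) j else 0) = Gsec n (i + 1) j"
  proof (cases "i + 1 \<in> sec n")
    case False then have "i + 1 = int n + 1" using ib unfolding sec_def by auto
    then show ?thesis using Gsec_right_boundary[where j=j and n=n] jb False by simp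
  qed simp
  moreover have "(if i - 1 \<in> sec n then Gsec n (i - 1) j else 0) = Gsec n (i - 1) j"
  proof (cases "i - 1 \<in> sec n")
    case False then have "i - 1 = - int n - 1" using ib unfolding sec_def by auto
    then show ?thesis using Gsec_left_boundary[where j=j and n=n] jb False by simp
  qed simp
  ultimately show "(\<Sum>k\<in>sec n. op_entry (schroedinger v) i k * Gsec n k j) = (if i = j then 1 else 0)"
    unfolding sum_op_entry_schroedinger_left[OF finite_sec] using i Gsec_left_inverse[OF n, of i j] by simp
  have "(if j - 1 \<in> sec n then Gsec n i (j - 1) else 0) = Gsec n i (j - 1)"
  proof (cases "j - 1 \<in> sec n")
    case False then have "j - 1 = - int n - 1" using jb unfolding sec_def by auto
    then show ?thesis using Gsec_left_boundary[where j=i and n=n] Gsec_sym[of n i "j - 1"] ib False by simp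
  qed simp
  moreover have "(if j + 1 \<in> sec n then Gsec n i (j + 1) else 0) = Gsec n i (j + 1)"
  proof (cases "j + 1 \<in> sec n")
    case False then have "j + 1 = int n + 1" using jb unfolding sec_def by auto
    then show ?thesis using Gsec_right_boundary[where j=i and n=n] Gsec_sym[of n i "j + 1"] ib False by simp
  qed simp
  ultimately show "(\<Sum>k\<in>sec n. Gsec n i k * op_entry (schroedinger v) k j) = (if i = j then 1 else 0)"
    unfolding sum_op_entry_schroedinger_right[OF finite_sec] using j Gsec_right_inverse[OF n, of i j]
    by (simp add: algebra_simps)
qed

lemma section_inv_op_eq:
  assumes n: "n \<ge> N0"
  shows "section_inv_op (schroedinger v) n x = (\<lambda>i. if i \<in> sec n then (\<Sum>j\<in>sec n. Gsec n i j * x j) else 0)"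
proof -
  define B where "B = (SOME B. is_section_inverse (schroedinger v) n B)"
  have "is_section_inverse (schroedinger v) n B"
    unfolding B_def by (rule someI[where P="is_section_inverse (schroedinger v) n", OF Gsec_is_section_inverse[OF n]])
  then have "B i j = Gsec n i j" if "i \<in> sec n" "j \<in> sec n" for i j
    using section_inverse_unique[OF _ Gsec_is_section_inverse[OF n] that] by blast
  then show ?thesis unfolding section_inv_op_def B_def[symmetric] Let_def
    by (intro ext) (auto intro!: sum.cong)
qed

definition G_majorant :: "int \<Rightarrow> real" where "G_majorant k = C1 * decay \<bar>k\<bar>"

lemma G_majorant_nonneg: "G_majorant k \<ge> 0"
  unfolding G_majorant_def using C1_nonneg by simp

lemma G_majorant_summable: "G_majorant summable_on UNIV"
  unfolding G_majorant_def[abs_def] decay_def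
  by (rule summable_on_cmult_right[OF summable_on_powr_abs_int[OF \<rho>_pos \<rho>_less_1]])

lemma norm_G_le_majorant: "norm (G i j) \<le> G_majorant (i - j)"
  unfolding G_majorant_def by (rule G_bound)

lemma section_inv_op_minus_kernel_op:
  assumes n: "n \<ge> N0" and p: "1 \<le> p" and x: "x \<in> lp p"
  shows "(\<lambda>i. section_inv_op (schroedinger v) n x i - kernel_op G x i) = kernel_op (Gdiff n) x"
proof
  fix i
  have sG: "(\<lambda>j. G i j * x j) summable_on UNIV"
    by (rule kernel_row_summable[OF G_majorant_nonneg G_majorant_summable norm_G_le_majorant norm_le_lp_norm[OF p x]])
  define F where "F j = (if i \<in> sec n \<and> j \<in> sec n then Gsec n i j else 0) * x j" for j
  have sF: "F summable_on UNIV"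
    by (rule summable_on_cong_neutral[where S="sec n", THEN iffD1]) (auto simp: F_def)
  have "infsum F UNIV = infsum F (sec n)" by (rule infsum_cong_neutral) (auto simp: F_def)
  then have iF: "infsum F UNIV = (if i \<in> sec n then (\<Sum>j\<in>sec n. Gsec n i j * x j) else 0)"
    by (auto simp: F_def)
  have "kernel_op (Gdiff n) x i = infsum (\<lambda>j. F j + - (G i j * x j)) UNIV"
    unfolding kernel_op_def Gdiff_def F_def by (simp add: algebra_simps)
  also have "\<dots> = infsum F UNIV - kernel_op G x i"
    unfolding kernel_op_def infsum_add[OF sF summable_on_uminus[THEN iffD2, OF sG]] by (simp add: infsum_uminus)
  finally show "section_inv_op (schroedinger v) n x i - kernel_op G x i = kernel_op (Gdiff n) x i"
    unfolding section_inv_op_eq[OF n] iF by simp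
qed

lemma is_lp_inverse_kernel_op_G:
  assumes p: "1 \<le> p" and V: "\<And>n. \<bar>v n\<bar> \<le> V"
  shows "is_lp_inverse p (schroedinger v) (kernel_op G)"
  unfolding is_lp_inverse_def
proof (intro conjI ballI)
  show "bounded_lp_op p (kernel_op G)"
    by (rule bounded_lp_op_kernel_op[OF p G_majorant_nonneg G_majorant_summable norm_G_le_majorant])
  fix x assume x: "x \<in> lp p"
  show "kernel_op G (schroedinger v x) = x"
    by (rule kernel_op_schroedinger[OF p x G_majorant_nonneg G_majorant_summable norm_G_le_majorant V])
       (unfold G_def, rule green_right_inverse[OF sol_u sol_s wronskian_ne_0])
  show "schroedinger v (kernel_op G x) = x"
    by (rule schroedinger_kernel_op[OF p x G_majorant_nonneg G_majorant_summable norm_G_le_majorant])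
       (unfold G_def, rule green_left_inverse[OF sol_u sol_s wronskian_ne_0])
qed

lemma lp_inv_schroedinger_eq:
  assumes p: "1 \<le> p" and V: "\<And>n. \<bar>v n\<bar> \<le> V" and x: "x \<in> lp p"
  shows "lp_inv p (schroedinger v) x = kernel_op G x"
proof -
  note inv = is_lp_inverse_kernel_op_G[OF p V]
  define B where "B = lp_inv p (schroedinger v)"
  have B: "is_lp_inverse p (schroedinger v) B"
    unfolding B_def lp_inv_def by (rule someI[of "is_lp_inverse p (schroedinger v)", OF inv])
  have "kernel_op G x \<in> lp p" "schroedinger v (kernel_op G x) = x"
    using inv x unfolding is_lp_inverse_def bounded_lp_op_def by blast+
  then show ?thesis using B unfolding B_def is_lp_inverse_def by metis
qed

text \<open>Half the decay rate of \<open>G\<close> is spent on the distance of the entries from the boundary of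
  the section.\<close>
definition decay_half :: "int \<Rightarrow> real" where "decay_half e = \<rho> powr (real_of_int e / 2)"

lemma decay_half_pos [simp]: "0 < decay_half e"
  unfolding decay_half_def using \<rho>_pos by simp

lemma decay_half_nonneg [simp]: "0 \<le> decay_half e"
  using decay_half_pos[of e] by linarith

lemma decay_half_antimono: "a \<le> b \<Longrightarrow> decay_half b \<le> decay_half a"
  unfolding decay_half_def using \<rho>_pos \<rho>_less_1 by (intro powr_mono') auto

lemma decay_le_decay_half_mult:
  "a \<le> m \<Longrightarrow> b \<le> m \<Longrightarrow> 0 \<le> a \<Longrightarrow> decay m \<le> decay_half a * min 1 (decay_half b)"
proof -
  assume ab: "a \<le> m" "b \<le> m" "0 \<le> a"
  have "decay m \<le> decay_half a * decay_half b"
    unfolding decay_def decay_half_def using \<rho>_pos \<rho>_less_1 ab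
    by (subst powr_add[symmetric]) (intro powr_mono', auto)
  moreover have "decay m \<le> decay_half a"
    unfolding decay_def decay_half_def using \<rho>_pos \<rho>_less_1 ab by (intro powr_mono') auto
  ultimately show ?thesis by (simp add: min_def)
qed

lemma decay_half_tendsto_0: "(\<lambda>n::nat. decay_half (int n - k)) \<longlonglongrightarrow> 0"
proof -
  have e: "decay_half (int n - k) = decay_half (- k) * (\<rho> powr (1 / 2)) ^ n" for n
    unfolding decay_half_def using \<rho>_pos
    by (simp add: powr_realpow[symmetric] powr_powr powr_add[symmetric] diff_divide_distrib)
  have "\<rho> powr (1 / 2) < 1 powr (1 / 2)" by (rule powr_less_mono2) (use \<rho>_pos \<rho>_less_1 in auto)
  then have "(\<lambda>n. decay_half (- k) * (\<rho> powr (1 / 2)) ^ n) \<longlonglongrightarrow> decay_half (- k) * 0"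
    using \<rho>_pos by (intro tendsto_mult tendsto_const LIMSEQ_power_zero) simp_all
  then show ?thesis unfolding e by simp
qed

lemma min_decay_half_le_on_sec:
  assumes "i \<in> sec k"
  shows "min 1 (decay_half (int n - \<bar>i\<bar>)) \<le> decay_half (int n - int k)"
proof -
  have "\<bar>i\<bar> \<le> int k" using assms unfolding sec_def by auto
  then show ?thesis using decay_half_antimono[of "int n - int k" "int n - \<bar>i\<bar>"]
    by (auto simp: min_le_iff_disj)
qed

definition Gdiff_majorant :: "int \<Rightarrow> real" where "Gdiff_majorant k = C3 * decay_half \<bar>k\<bar>"

lemma C3_nonneg: "0 \<le> C3"
  unfolding C3_def using C1_nonneg C2_nonneg by simp

lemma Gdiff_majorant_nonneg: "Gdiff_majorant k \<ge> 0"
  unfolding Gdiff_majorant_def using C3_nonneg by simp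

lemma Gdiff_majorant_summable: "Gdiff_majorant summable_on UNIV"
proof -
  have "\<rho> powr (1 / 2) < 1 powr (1 / 2)" by (rule powr_less_mono2) (use \<rho>_pos \<rho>_less_1 in auto)
  then have "(\<lambda>k::int. (\<rho> powr (1 / 2)) powr real_of_int \<bar>k\<bar>) summable_on UNIV"
    using \<rho>_pos by (intro summable_on_powr_abs_int) simp_all
  moreover have "(\<rho> powr (1 / 2)) powr real_of_int \<bar>k\<bar> = decay_half \<bar>k\<bar>" for k
    unfolding decay_half_def by (simp add: powr_powr)
  ultimately show ?thesis
    unfolding Gdiff_majorant_def[abs_def] by (simp add: summable_on_cmult_right)
qed

lemma Gdiff_bound_col:
  assumes n: "n \<ge> N0"
  shows "norm (Gdiff n i j) \<le> Gdiff_majorant (i - j) * min 1 (decay_half (int n - \<bar>j\<bar>))"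
proof -
  have "decay (sec_exponent n i j) \<le> decay_half \<bar>i - j\<bar> * min 1 (decay_half (int n - \<bar>j\<bar>))"
    by (rule decay_le_decay_half_mult) (auto simp: sec_exponent_def)
  then show ?thesis
    using Gdiff_bound[OF n, of i j] mult_left_mono[OF _ C3_nonneg] unfolding Gdiff_majorant_def
    by (smt (verit) mult.assoc)
qed

lemma Gdiff_bound_row:
  assumes n: "n \<ge> N0"
  shows "norm (Gdiff n i j) \<le> Gdiff_majorant (i - j) * min 1 (decay_half (int n - \<bar>i\<bar>))"
proof -
  have "decay (sec_exponent n i j) \<le> decay_half \<bar>i - j\<bar> * min 1 (decay_half (int n - \<bar>i\<bar>))"
    by (rule decay_le_decay_half_mult) (auto simp: sec_exponent_def)
  then show ?thesis
    using Gdiff_bound[OF n, of i j] mult_left_mono[OF _ C3_nonneg] unfolding Gdiff_majorant_def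
    by (smt (verit) mult.assoc)
qed

lemma strong_conv_finite:
  assumes p: "1 \<le> p" "p \<noteq> \<infinity>" and V: "\<And>n. \<bar>v n\<bar> \<le> V"
  shows "strong_conv p (section_inv_op (schroedinger v)) (lp_inv p (schroedinger v))"
  unfolding strong_conv_def using p(2)
proof (simp, intro ballI)
  fix x assume x: "x \<in> lp p"
  define \<mu> where "\<mu> n j = min 1 (decay_half (int n - \<bar>j\<bar>))" for n :: nat and j :: int
  define z where "z n = (\<lambda>j. complex_of_real (\<mu> n j) * x j)" for n
  define S where "S = infsum Gdiff_majorant UNIV"
  have mu0: "0 \<le> \<mu> n j" and mu1: "\<mu> n j \<le> 1" for n j unfolding \<mu>_def by auto
  have z: "z n \<in> lp p" for n
    using lp_dominated[OF p(1) x, of "z n"] mu0 mu1 unfolding z_def by (simp add: norm_mult mult_left_le_one_le)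
  have unif: "\<exists>N. \<forall>n\<ge>N. \<forall>j\<in>sec m. \<mu> n j \<le> e" if e: "e > 0" for m e
  proof -
    obtain N where N: "\<And>n. n \<ge> N \<Longrightarrow> decay_half (int n - int m) < e"
      using order_tendstoD(2)[OF decay_half_tendsto_0[of "int m"] e] unfolding eventually_sequentially by blast
    then show ?thesis unfolding \<mu>_def using min_decay_half_le_on_sec by (meson le_less_trans less_imp_le)
  qed
  have lim: "(\<lambda>n. S * lp_norm p (z n)) \<longlonglongrightarrow> S * 0" unfolding z_def
    by (intro tendsto_mult tendsto_const lp_norm_multiplier_tendsto_0[OF p x mu0 mu1 unif])
  have bound: "lp_norm p (\<lambda>i. section_inv_op (schroedinger v) n x i - lp_inv p (schroedinger v) x i)
      \<le> S * lp_norm p (z n)" if n: "n \<ge> N0" for n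
  proof -
    have "norm (Gdiff n i j * x j) \<le> Gdiff_majorant (i - j) * norm (z n j)" for i j
      using mult_right_mono[OF Gdiff_bound_col[OF n, of i j] norm_ge_zero[of "x j"]] mu0[of n j]
      unfolding z_def \<mu>_def norm_mult by (simp add: mult.assoc)
    from kernel_op_dominated[OF p(1) z Gdiff_majorant_nonneg Gdiff_majorant_summable this]
    show ?thesis
      unfolding lp_inv_schroedinger_eq[OF p(1) V x] section_inv_op_minus_kernel_op[OF n p(1) x] S_def by simp
  qed
  have "eventually (\<lambda>n. 0 \<le> lp_norm p (\<lambda>i. section_inv_op (schroedinger v) n x i - lp_inv p (schroedinger v) x i)) sequentially"
    using p(2) by (simp add: lp_norm_finite)
  moreover have "eventually (\<lambda>n. lp_norm p (\<lambda>i. section_inv_op (schroedinger v) n x i - lp_inv p (schroedinger v) x i)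
      \<le> S * lp_norm p (z n)) sequentially"
    using bound unfolding eventually_sequentially by blast
  ultimately show "(\<lambda>n. lp_norm p (\<lambda>i. section_inv_op (schroedinger v) n x i - lp_inv p (schroedinger v) x i)) \<longlonglongrightarrow> 0"
    using tendsto_sandwich[OF _ _ tendsto_const lim] by simp
qed

lemma lp_opnorm_kernel_op_tendsto_0:
  assumes rep: "\<And>n x. n \<ge> N0 \<Longrightarrow> x \<in> lp \<infinity> \<Longrightarrow> T n x = kernel_op (K n) x"
    and bd: "\<And>n i j. n \<ge> N0 \<Longrightarrow> norm (K n i j) \<le> decay_half (int n - int k) * Gdiff_majorant (i - j)"
  shows "(\<lambda>n. lp_opnorm \<infinity> (T n)) \<longlonglongrightarrow> 0"
proof -
  define S where "S = infsum Gdiff_majorant UNIV"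
  have S0: "0 \<le> S" unfolding S_def by (rule infsum_nonneg) (use Gdiff_majorant_nonneg in auto)
  have p: "(1::ereal) \<le> \<infinity>" by simp
  have bound: "0 \<le> lp_opnorm \<infinity> (T n) \<and> lp_opnorm \<infinity> (T n) \<le> decay_half (int n - int k) * S"
    if n: "n \<ge> N0" for n
  proof (rule lp_opnorm_le[OF p])
    define g where "g t = decay_half (int n - int k) * Gdiff_majorant t" for t
    have g0: "g t \<ge> 0" for t unfolding g_def using Gdiff_majorant_nonneg by simp
    have gs: "g summable_on UNIV" unfolding g_def[abs_def] by (rule summable_on_cmult_right[OF Gdiff_majorant_summable])
    have gi: "infsum g UNIV = decay_half (int n - int k) * S"
      unfolding g_def S_def by (rule infsum_cmult_right) (use Gdiff_majorant_summable in simp)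
    fix x assume x: "x \<in> lp \<infinity>"
    have "norm (K n i j * x j) \<le> g (i - j) * norm (x j)" for i j
      unfolding g_def norm_mult using bd[OF n, of i j] by (intro mult_right_mono) auto
    then show "T n x \<in> lp \<infinity> \<and> lp_norm \<infinity> (T n x) \<le> decay_half (int n - int k) * S * lp_norm \<infinity> x"
      unfolding rep[OF n x] using kernel_op_dominated[OF p x g0 gs] unfolding gi by blast
  qed (use S0 in simp)
  have "(\<lambda>n. decay_half (int n - int k) * S) \<longlonglongrightarrow> 0 * S"
    by (intro tendsto_mult tendsto_const decay_half_tendsto_0)
  moreover have "eventually (\<lambda>n. 0 \<le> lp_opnorm \<infinity> (T n)) sequentially"
    "eventually (\<lambda>n. lp_opnorm \<infinity> (T n) \<le> decay_half (int n - int k) * S) sequentially"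
    using bound unfolding eventually_sequentially by blast+
  ultimately show ?thesis using tendsto_sandwich[OF _ _ tendsto_const] by simp
qed

lemma strong_conv_infinity:
  assumes V: "\<And>n. \<bar>v n\<bar> \<le> V"
  shows "strong_conv \<infinity> (section_inv_op (schroedinger v)) (lp_inv \<infinity> (schroedinger v))"
  unfolding strong_conv_def
proof (simp, intro allI conjI)
  have p: "(1::ereal) \<le> \<infinity>" by simp
  have diff: "(\<lambda>i. section_inv_op (schroedinger v) n x i - lp_inv \<infinity> (schroedinger v) x i) = kernel_op (Gdiff n) x"
    if "n \<ge> N0" "x \<in> lp \<infinity>" for n x
    unfolding lp_inv_schroedinger_eq[OF p V that(2)] by (rule section_inv_op_minus_kernel_op[OF that(1) p that(2)])
  fix k
  show "(\<lambda>n. lp_opnorm \<infinity> (\<lambda>x. proj k (\<lambda>i. section_inv_op (schroedinger v) n x i - lp_inv \<infinity> (schroedinger v) x i))) \<longlonglongrightarrow> 0"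
  proof (rule lp_opnorm_kernel_op_tendsto_0[where K="\<lambda>n i j. if i \<in> sec k then Gdiff n i j else 0"])
    fix n x assume "n \<ge> N0" "x \<in> lp \<infinity>"
    then show "proj k (\<lambda>i. section_inv_op (schroedinger v) n x i - lp_inv \<infinity> (schroedinger v) x i)
        = kernel_op (\<lambda>i j. if i \<in> sec k then Gdiff n i j else 0) x"
      unfolding diff[OF \<open>n \<ge> N0\<close> \<open>x \<in> lp \<infinity>\<close>] proj_def kernel_op_def by (intro ext) auto
  next
    fix n i j assume n: "n \<ge> N0"
    show "norm (if i \<in> sec k then Gdiff n i j else 0) \<le> decay_half (int n - int k) * Gdiff_majorant (i - j)"
      using Gdiff_bound_row[OF n, of i j] min_decay_half_le_on_sec[of i k n] mult_left_mono[OF _ Gdiff_majorant_nonneg]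
        Gdiff_majorant_nonneg[of "i - j"]
      by (auto simp: mult.commute intro: order_trans)
  qed
  show "(\<lambda>n. lp_opnorm \<infinity> (\<lambda>x i. section_inv_op (schroedinger v) n (proj k x) i - lp_inv \<infinity> (schroedinger v) (proj k x) i)) \<longlonglongrightarrow> 0"
  proof (rule lp_opnorm_kernel_op_tendsto_0[where K="\<lambda>n i j. Gdiff n i j * (if j \<in> sec k then 1 else 0)"])
    fix n x assume n: "n \<ge> N0" and x: "x \<in> lp \<infinity>"
    have px: "proj k x \<in> lp \<infinity>" using lp_dominated[OF p x, of "proj k x"] unfolding proj_def by auto
    show "(\<lambda>i. section_inv_op (schroedinger v) n (proj k x) i - lp_inv \<infinity> (schroedinger v) (proj k x) i)
        = kernel_op (\<lambda>i j. Gdiff n i j * (if j \<in> sec k then 1 else 0)) x"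
      unfolding diff[OF n px] by (auto simp: kernel_op_def proj_def intro!: ext infsum_cong)
  next
    fix n i j assume n: "n \<ge> N0"
    show "norm (Gdiff n i j * (if j \<in> sec k then 1 else 0)) \<le> decay_half (int n - int k) * Gdiff_majorant (i - j)"
      using Gdiff_bound_col[OF n, of i j] min_decay_half_le_on_sec[of j k n] mult_left_mono[OF _ Gdiff_majorant_nonneg]
        Gdiff_majorant_nonneg[of "i - j"]
      by (auto simp: mult.commute intro: order_trans)
  qed
qed

lemma fsm_applicable:
  assumes p: "1 \<le> p" and V: "\<And>n. \<bar>v n\<bar> \<le> V"
  shows "fsm_applicable p (schroedinger v)"
  unfolding fsm_applicable_def
proof (intro conjI)
  show "invertible_lp p (schroedinger v)"
    unfolding invertible_lp_def
    using bounded_lp_op_schroedinger[of p v V, OF p V] is_lp_inverse_kernel_op_G[OF p V] by blast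
  show "\<exists>N. \<forall>n\<ge>N. section_invertible (schroedinger v) n"
    unfolding section_invertible_def using Gsec_is_section_inverse by blast
  show "strong_conv p (section_inv_op (schroedinger v)) (lp_inv p (schroedinger v))"
    using strong_conv_infinity[OF V] strong_conv_finite[OF p _ V] by (cases "p = \<infinity>") auto
qed

end

theorem fsm_applicable_if_hyperbolic:
  assumes p: "1 \<le> p" and K: "K \<ge> 1" and per: "\<forall>n. v (n + int K) = v n"
    and adm: "admissible_potential v K" and t: "\<bar>trace (monodromy v K)\<bar> > 2"
  shows "fsm_applicable p (schroedinger v)"
proof -
  obtain \<phi>u \<phi>s \<rho> c C where "dichotomy v \<phi>u \<phi>s \<rho> c C"
    using dichotomy_if_hyperbolic[OF K per adm t] .
  then show ?thesis using dichotomy.fsm_applicable periodic_bounded[OF K per] p by blast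
qed

section \<open>Failure of invertibility in the elliptic case\<close>

lemma elliptic_bloch_solution:
  assumes K: "K \<ge> 1" and per: "\<forall>n. v (n + int K) = v n" and t: "\<bar>trace (monodromy v K)\<bar> \<le> 2"
  obtains u where "is_solution v u" "\<And>n. norm (u (n + int K)) = norm (u n)" "u 0 \<noteq> 0 \<or> u (-1) \<noteq> 0"
proof -
  obtain \<mu> where mu: "\<mu>\<^sup>2 - complex_of_real (trace (monodromy v K)) * \<mu> + 1 = 0" "norm \<mu> = 1"
    using elliptic_root[OF t] by blast
  have mu0: "\<mu> \<noteq> 0" using mu(2) by auto
  obtain w where w: "w \<noteq> (0, 0)" "propagate v w K = (\<mu> * fst w, \<mu> * snd w)"
    using propagate_eigenvector[of \<mu> v K] mu(1) unfolding trace_monodromy by blast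
  show ?thesis
  proof (rule that[of "bloch v K \<mu> w"])
    show "is_solution v (bloch v K \<mu> w)" by (rule bloch_is_solution[OF K per mu0 w(2)])
    show "norm (bloch v K \<mu> w (n + int K)) = norm (bloch v K \<mu> w n)" for n
      using bloch_shift[OF K mu0, of v w n 1] mu(2) by (simp add: norm_mult)
    show "bloch v K \<mu> w 0 \<noteq> 0 \<or> bloch v K \<mu> w (-1) \<noteq> 0"
      using bloch_init[OF K mu0 w(2)] w(1) by (cases w) auto
  qed
qed

lemma lp_inverse_lower_bound:
  assumes "is_lp_inverse p A B"
  obtains C where "\<And>x. x \<in> lp p \<Longrightarrow> A x \<in> lp p \<Longrightarrow> lp_norm p x \<le> C * lp_norm p (A x)"
proof -
  obtain C where "\<And>y. y \<in> lp p \<Longrightarrow> lp_norm p (B y) \<le> C * lp_norm p y"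
    and "\<And>x. x \<in> lp p \<Longrightarrow> B (A x) = x"
    using assms unfolding is_lp_inverse_def bounded_lp_op_def by blast
  then show ?thesis using that[of C] by metis
qed

lemma lp_inverse_zero:
  assumes p: "1 \<le> p" and "is_lp_inverse p A B"
  shows "B (\<lambda>_. 0) = (\<lambda>_. 0)"
proof -
  have "\<forall>x\<in>lp p. \<forall>c. B (\<lambda>n. c * x n) = (\<lambda>n. c * B x n)"
    using assms(2) unfolding is_lp_inverse_def bounded_lp_op_def by blast
  from this[rule_format, OF lp_zero[OF p], of 0] show ?thesis by simp
qed

definition truncate :: "int \<Rightarrow> (int \<Rightarrow> complex) \<Rightarrow> int \<Rightarrow> complex" where
  "truncate M u n = (if n \<in> {-1 .. M} then u n else 0)"

lemma lp_truncate: "1 \<le> p \<Longrightarrow> truncate M u \<in> lp p"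
  by (rule lp_finite_support[of p "{-1 .. M}"]) (auto simp: truncate_def)

lemma schroedinger_truncate_bounds:
  assumes p: "1 \<le> p" "p \<noteq> \<infinity>" and u: "is_solution v u" and M: "0 \<le> M"
    and ub: "\<And>n. norm (u n) \<le> B" and V: "\<And>n. \<bar>v n\<bar> \<le> V"
  shows "schroedinger v (truncate M u) \<in> lp p"
    and "lp_norm p (schroedinger v (truncate M u)) \<le> (4 * ((2 + V) * B) powr real_of_ereal p) powr (1 / real_of_ereal p)"
proof -
  define P where "P = real_of_ereal p"
  have P: "P \<ge> 1" using real_of_ereal_ge_1[OF p] P_def by simp
  define x where "x = truncate M u"
  define F where "F = {-2, -1, M, M + 1}"
  have B0: "0 \<le> B" using ub[of 0] norm_ge_zero order_trans by blast
  have V0: "0 \<le> V" using V[of 0] by simp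
  have Hx0: "schroedinger v x n = 0" if n: "n \<notin> F" for n
  proof (cases "0 \<le> n \<and> n \<le> M - 1")
    case True
    then have "schroedinger v x n = schroedinger v u n" unfolding schroedinger_def x_def truncate_def by simp
    then show ?thesis using u unfolding is_solution_iff_schroedinger by simp
  qed (use n in \<open>auto simp: schroedinger_def x_def truncate_def F_def\<close>)
  show "schroedinger v (truncate M u) \<in> lp p"
    using lp_finite_support[OF p(1), of F] Hx0 unfolding x_def F_def by auto
  have xb: "norm (x n) \<le> B" for n unfolding x_def truncate_def using ub B0 by auto
  have Hxb: "norm (schroedinger v x n) \<le> (2 + V) * B" for n
  proof -
    have "norm (schroedinger v x n) \<le> norm (x (n + 1)) + norm (x (n - 1)) + \<bar>v n\<bar> * norm (x n)"
      unfolding schroedinger_def by (rule order_trans[OF norm_triangle_ineq]) (simp add: norm_mult norm_triangle_ineq)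
    also have "\<dots> \<le> B + B + V * B" by (intro add_mono mult_mono xb V) (auto simp: B0 V0)
    finally show ?thesis by (simp add: algebra_simps)
  qed
  have "card F \<le> 4" unfolding F_def by (rule order_trans[OF card_insert_le_m1]) (auto simp: card_insert_le_m1)
  have "(\<Sum>n\<in>F. norm (schroedinger v x n) powr P) \<le> (\<Sum>n\<in>F. ((2 + V) * B) powr P)"
    by (intro sum_mono powr_mono2) (use Hxb P in auto)
  also have "\<dots> \<le> 4 * ((2 + V) * B) powr P"
    using \<open>card F \<le> 4\<close> by (simp add: mult_right_mono)
  finally have "(\<Sum>n\<in>F. norm (schroedinger v x n) powr P) \<le> 4 * ((2 + V) * B) powr P" .
  moreover have "lp_norm p (schroedinger v x) = (\<Sum>n\<in>F. norm (schroedinger v x n) powr P) powr (1 / P)"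
    unfolding P_def by (rule lp_norm_finite_support[OF p(2)]) (use Hx0 in \<open>auto simp: F_def\<close>)
  ultimately show "lp_norm p (schroedinger v (truncate M u)) \<le> (4 * ((2 + V) * B) powr real_of_ereal p) powr (1 / real_of_ereal p)"
    unfolding x_def[symmetric] P_def[symmetric] using P by (auto intro!: powr_mono2 sum_nonneg)
qed

lemma lp_norm_truncate_lower_bound:
  assumes p: "1 \<le> p" "p \<noteq> \<infinity>" and K: "K \<ge> 1" and e: "e \<in> {-1, 0}"
    and \<gamma>: "\<And>j. norm (u (int (j * K) + e)) = \<gamma>"
  shows "(real (Suc N) * \<gamma> powr real_of_ereal p) powr (1 / real_of_ereal p) \<le> lp_norm p (truncate (int (N * K)) u)"
proof -
  define P where "P = real_of_ereal p"
  have P: "P \<ge> 1" using real_of_ereal_ge_1[OF p] P_def by simp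
  define S where "S = {-1 .. int (N * K)}"
  define J where "J = (\<lambda>j. int (j * K) + e) ` {0..N}"
  have JS: "J \<subseteq> S"
  proof
    fix n assume "n \<in> J"
    then obtain j where j: "j \<le> N" "n = int (j * K) + e" unfolding J_def by auto
    have "j * K \<le> N * K" using j by simp
    then have jN: "int (j * K) \<le> int (N * K)" by linarith
    have jk0: "0 \<le> int (j * K)" by (rule of_nat_0_le_iff)
    have "e = -1 \<or> e = 0" using e by simp
    then have "-1 \<le> n \<and> n \<le> int (N * K)" using j(2) jN jk0 by linarith
    then show "n \<in> S" unfolding S_def by simp
  qed
  have "inj_on (\<lambda>j. int (j * K) + e) {0..N}" unfolding inj_on_def using K by auto
  then have "real (Suc N) * \<gamma> powr P = (\<Sum>n\<in>J. norm (u n) powr P)"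
    unfolding J_def using \<gamma> by (simp add: sum.reindex)
  also have "\<dots> = (\<Sum>n\<in>J. norm (truncate (int (N * K)) u n) powr P)"
    using JS unfolding truncate_def S_def by (intro sum.cong) auto
  also have "\<dots> \<le> (\<Sum>n\<in>S. norm (truncate (int (N * K)) u n) powr P)"
    by (rule sum_mono2[OF _ JS]) (auto simp: S_def)
  finally have "real (Suc N) * \<gamma> powr P \<le> (\<Sum>n\<in>S. norm (truncate (int (N * K)) u n) powr P)" .
  moreover have "lp_norm p (truncate (int (N * K)) u) = (\<Sum>n\<in>S. norm (truncate (int (N * K)) u n) powr P) powr (1 / P)"
    unfolding P_def by (rule lp_norm_finite_support[OF p(2)]) (auto simp: S_def truncate_def)
  ultimately show ?thesis using P unfolding P_def[symmetric] by (auto intro!: powr_mono2)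
qed

lemma not_invertible_infinity_if_bounded_solution:
  assumes u: "is_solution v u" and b: "bounded (range u)" and nz: "u \<noteq> (\<lambda>_. 0)"
  shows "\<not> invertible_lp \<infinity> (schroedinger v)"
proof
  assume "invertible_lp \<infinity> (schroedinger v)"
  then obtain B where B: "is_lp_inverse \<infinity> (schroedinger v) B" unfolding invertible_lp_def by blast
  have "u \<in> lp \<infinity>" using b mem_lp_infinity by simp
  then have "u = B (\<lambda>_. 0)"
    using B u unfolding is_lp_inverse_def is_solution_iff_schroedinger by metis
  then show False using lp_inverse_zero[OF _ B] nz by simp
qed

lemma not_invertible_finite_if_periodic_modulus_solution:
  assumes p: "1 \<le> p" "p \<noteq> \<infinity>" and K: "K \<ge> 1" and V: "\<And>n. \<bar>v n\<bar> \<le> V"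
    and u: "is_solution v u" and ub: "\<And>n. norm (u n) \<le> B"
    and e: "e \<in> {-1, 0}" "u e \<noteq> 0" and \<gamma>: "\<And>j. norm (u (int (j * K) + e)) = norm (u e)"
  shows "\<not> invertible_lp p (schroedinger v)"
proof
  assume "invertible_lp p (schroedinger v)"
  then obtain Cb where Cb: "\<And>x. x \<in> lp p \<Longrightarrow> schroedinger v x \<in> lp p \<Longrightarrow> lp_norm p x \<le> Cb * lp_norm p (schroedinger v x)"
    using lp_inverse_lower_bound unfolding invertible_lp_def by metis
  define P where "P = real_of_ereal p"
  have P: "P \<ge> 1" using real_of_ereal_ge_1[OF p] P_def by simp
  define R where "R = (4 * ((2 + V) * B) powr P) powr (1 / P)"
  obtain N :: nat where N: "(\<bar>Cb\<bar> * R) powr P / norm (u e) powr P < real N" using reals_Archimedean2 by blast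
  define x where "x = truncate (int (N * K)) u"
  have Hx: "schroedinger v x \<in> lp p" "lp_norm p (schroedinger v x) \<le> R"
    using schroedinger_truncate_bounds[OF p u _ ub V] unfolding x_def R_def P_def by auto
  have "(real (Suc N) * norm (u e) powr P) powr (1 / P) \<le> lp_norm p x"
    using lp_norm_truncate_lower_bound[where N=N and u=u and \<gamma>="norm (u e)", OF p K e(1) \<gamma>] unfolding x_def P_def .
  also have "\<dots> \<le> Cb * lp_norm p (schroedinger v x)"
    using Cb[OF lp_truncate[OF p(1)] Hx(1)[unfolded x_def]] unfolding x_def .
  also have "\<dots> \<le> \<bar>Cb\<bar> * R"
    using lp_norm_nonneg[OF p(1) Hx(1)] Hx(2)
    by (meson abs_ge_self abs_ge_zero mult_left_mono mult_right_mono order_trans)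
  finally have "((real (Suc N) * norm (u e) powr P) powr (1 / P)) powr P \<le> (\<bar>Cb\<bar> * R) powr P"
    using P by (intro powr_mono2) auto
  then have "real (Suc N) * norm (u e) powr P \<le> (\<bar>Cb\<bar> * R) powr P"
    using P by (simp add: powr_powr)
  moreover have "(\<bar>Cb\<bar> * R) powr P < real N * norm (u e) powr P"
    using N e(2) by (simp add: divide_less_eq)
  moreover have "real N * norm (u e) powr P \<le> real (Suc N) * norm (u e) powr P"
    by (intro mult_right_mono) auto
  ultimately show False by linarith
qed

theorem not_invertible_if_elliptic:
  assumes p: "1 \<le> p" and K: "K \<ge> 1" and per: "\<forall>n. v (n + int K) = v n"
    and t: "\<bar>trace (monodromy v K)\<bar> \<le> 2"
  shows "\<not> invertible_lp p (schroedinger v)"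
proof -
  obtain u where u: "is_solution v u" and mod: "\<And>n. norm (u (n + int K)) = norm (u n)"
    and nz: "u 0 \<noteq> 0 \<or> u (-1) \<noteq> 0"
    using elliptic_bloch_solution[OF K per t] by blast
  define B where "B = (\<Sum>r<K. norm (u (int r)))"
  have ub: "norm (u n) \<le> B" for n
    using periodic_bounded[OF K, of "\<lambda>n. norm (u n)"] mod unfolding B_def by simp
  obtain e where e: "e \<in> {-1, 0}" "u e \<noteq> 0" using nz by auto
  show ?thesis
  proof (cases "p = \<infinity>")
    case True
    have "bounded (range u)" unfolding bounded_iff using ub by auto
    then show ?thesis
      using not_invertible_infinity_if_bounded_solution[OF u] e(2) True by fastforce
  next
    case False
    have "norm (u (int (j * K) + e)) = norm (u e)" for j
      using periodic_shift[of "\<lambda>n. norm (u n)" K e "int j"] mod by (simp add: algebra_simps)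
    then show ?thesis
      using not_invertible_finite_if_periodic_modulus_solution[OF p False K periodic_bounded[OF K per] u ub e]
      by blast
  qed
qed

theorem theorem1p2:
  fixes p :: ereal and v :: "int \<Rightarrow> real" and K :: nat
  assumes p: "1 \<le> p"
    and K: "K \<ge> 1"
    and per: "\<forall>n. v (n + int K) = v n"
    and cases: "K = 2
             \<or> (K \<le> 8 \<and> (\<exists>lam\<in>\<rat>. \<forall>n. v n \<in> {0, lam}))
             \<or> (\<forall>n. v n \<in> \<int>)"
  shows "fsm_applicable p (schroedinger v) \<longleftrightarrow> \<bar>trace (monodromy v K)\<bar> > 2"
proof
  assume "fsm_applicable p (schroedinger v)"
  then have "invertible_lp p (schroedinger v)" unfolding fsm_applicable_def by blast
  then show "\<bar>trace (monodromy v K)\<bar> > 2" using not_invertible_if_elliptic[OF p K per] by force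
next
  assume "\<bar>trace (monodromy v K)\<bar> > 2"
  moreover have "admissible_potential v K" using cases unfolding admissible_potential_def .
  ultimately show "fsm_applicable p (schroedinger v)" using fsm_applicable_if_hyperbolic[OF p K per] by blast
qed

end
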